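(* Let $\mathbb{H}=\{z\in\mathbb{C}:\operatorname{Im} z>0\}$ and let $\Phi:\mathbb{H}\to\mathbb{H}$ be holomorphic of hyperbolic type with Denjoy–Wolff point $\infty$, i.e. $A:=\inf_{z\in\mathbb{H}}\frac{\operatorname{Im}\Phi(z)}{\operatorname{Im} z}>1$. Suppose $\sigma:\mathbb{H}\to\mathbb{H}$ is holomorphic and satisfies $\sigma\circ\Phi=A\sigma$ on $\mathbb{H}$. Then $\sigma$ has non-tangential limit $\infty$ at $\infty$, it is semi-conformal at $\infty$, i.e. \[ \operatorname{K-lim}_{z\to\infty}\operatorname{Arg}\frac{\sigma(z)}{z}=0, \] and every other holomorphic map $\tilde\sigma:\mathbb{H}\to\mathbb{H}$ satisfying $\tilde\sigma\circ\Phi=A\tilde\sigma$ is of the form $\tilde\sigma=\mu\sigma$ for some constant $\mu>0$.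
   Context: For a function $f$ on $\mathbb{H}$, $\operatorname{K-lim}_{z\to\infty}f(z)=L$ (non-tangential limit) means that $f(z)\to L$ as $z\to\infty$ within every sector $\{|\operatorname{Arg} z-\pi/2|<\pi/2-\delta\}$, $\delta>0$. $\operatorname{Arg}$ denotes the principal argument. *)

theory Defs
  imports "HOL-Complex_Analysis.Complex_Analysis"
begin

definition upper_half_plane :: "complex set" ("\<bbbH>") where
  "upper_half_plane = {z. Im z > 0}"

definition sector :: "real \<Rightarrow> complex set" where
  "sector \<delta> = {z. \<bar>Arg z - pi/2\<bar> < pi/2 - \<delta>}"

definition sector_at_infinity :: "real \<Rightarrow> complex filter" where
  "sector_at_infinity \<delta> = inf at_infinity (principal (sector \<delta>))"

definition Klim_infinity :: "(complex \<Rightarrow> 'a::topological_space) \<Rightarrow> 'a \<Rightarrow> bool" where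
  "Klim_infinity f L \<longleftrightarrow> (\<forall>\<delta>>0. (f \<longlongrightarrow> L) (sector_at_infinity \<delta>))"

definition Klim_infinity_infinity :: "(complex \<Rightarrow> complex) \<Rightarrow> bool" where
  "Klim_infinity_infinity f \<longleftrightarrow> (\<forall>\<delta>>0. filterlim f at_infinity (sector_at_infinity \<delta>))"

end

(*
  Everything is driven by rescaling.  By the Schwarz-Pick lemma, the maps v |-> Phi (R v) / R and
  v |-> sigma (R v) / |sigma (i R)| form normal families of self-maps of the upper half-plane.
  Every limit of the first family as R -> oo is v |-> A v: its imaginary part is at least A Im v,
  with equality at i by the extremality of A, so it differs from A v by a real constant, which
  the growth bound |Phi (i R)| <= (R + 1/R) |Phi i| kills.  Passing the Schroeder equation and the
  Schwarz-Pick inequality to the limit, every limit G of the second family commutes with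
  v |-> A v and moves points towards the imaginary axis; in the coordinate log v this forces G to
  be a dilation, and |G i| = 1 makes it the identity.  Hence sigma z ~ |sigma (i |z|)| z / |z|
  uniformly in sectors, which gives both non-tangential statements once |sigma (i R)| -> oo,
  a consequence of |sigma (i A R)| / |sigma (i R)| -> A.  For uniqueness, tau / sigma is invariant
  under Phi; the orbits of z and of i stay in a sector at bounded hyperbolic distance from each
  other, so along them the rescaling limits of sigma and tau agree, and tau / sigma takes the same
  positive value at z and at i.
*)

theory Submission
  imports Defs
begin

section \<open>Schwarz--Pick lemma on the upper half-plane\<close>

lemma in_upper_half_plane_iff [simp]: "z \<in> \<bbbH> \<longleftrightarrow> 0 < Im z"
  by (simp add: upper_half_plane_def)

lemma open_upper_half_plane: "open \<bbbH>"
  unfolding upper_half_plane_def by (rule open_halfspace_Im_gt)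

lemma connected_upper_half_plane: "connected \<bbbH>"
  unfolding upper_half_plane_def by (rule connected_halfspace_Im_gt)

lemma self_map_Im_pos:
  assumes "f ` \<bbbH> \<subseteq> \<bbbH>" "0 < Im z"
  shows "0 < Im (f z)"
  using assms unfolding image_subset_iff by simp

lemma funpow_self_map_Im_pos:
  assumes "f ` \<bbbH> \<subseteq> \<bbbH>" "0 < Im z"
  shows "0 < Im ((f ^^ n) z)"
  by (induction n) (simp_all add: assms self_map_Im_pos)

lemma Im_le_cmod: "Im z \<le> cmod z"
  using abs_Im_le_cmod[of z] by linarith

lemma norm_diff_cnj_sq: "(cmod (p - cnj q))\<^sup>2 = (cmod (p - q))\<^sup>2 + 4 * Im p * Im q"
  unfolding cmod_power2 by (simp add: algebra_simps power2_eq_square)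

lemma diff_cnj_nonzero:
  assumes "0 < Im p" "0 < Im q"
  shows "p - cnj q \<noteq> 0"
proof
  assume "p - cnj q = 0"
  then have "Im (p - cnj q) = 0" by simp
  with assms show False by simp
qed

lemma norm_cayley_lt_1:
  assumes "0 < Im w" "0 < Im a"
  shows "cmod ((w - a) / (w - cnj a)) < 1"
proof -
  have "(cmod (w - a))\<^sup>2 < (cmod (w - cnj a))\<^sup>2"
    using norm_diff_cnj_sq[of w a] assms by simp
  then have "cmod (w - a) < cmod (w - cnj a)"
    by (meson norm_ge_zero power_less_imp_less_base)
  then show ?thesis
    using diff_cnj_nonzero[OF assms] by (simp add: norm_divide divide_less_eq)
qed

lemma Schwarz_Pick_cayley:
  assumes hol: "f holomorphic_on \<bbbH>" and maps: "f ` \<bbbH> \<subseteq> \<bbbH>"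
    and z0: "0 < Im z0" and z: "0 < Im z"
  shows "cmod ((f z - f z0) / (f z - cnj (f z0))) \<le> cmod ((z - z0) / (z - cnj z0))"
proof -
  define M where "M u = (z0 - cnj z0 * u) / (1 - u)" for u
  define g where "g u = (f (M u) - f z0) / (f (M u) - cnj (f z0))" for u
  have Im_M: "Im (M u) = Im z0 * (1 - (cmod u)\<^sup>2) / (cmod (1 - u))\<^sup>2" for u
    unfolding M_def cmod_power2 by (simp add: Im_divide algebra_simps power2_eq_square)
  have M_in: "0 < Im (M u)" if "cmod u < 1" for u
  proof -
    have "u \<noteq> 1" using that by auto
    moreover have "(cmod u)\<^sup>2 < 1" using that by (simp add: abs_square_less_1)
    ultimately show ?thesis using z0 by (simp add: Im_M)
  qed
  have "M holomorphic_on ball 0 1"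
    unfolding M_def by (intro holomorphic_intros) auto
  then have "(f \<circ> M) holomorphic_on ball 0 1"
    by (rule holomorphic_on_compose_gen[OF _ hol]) (use M_in in auto)
  then have hol_g: "g holomorphic_on ball 0 1"
    unfolding g_def using diff_cnj_nonzero self_map_Im_pos[OF maps] M_in z0
    by (intro holomorphic_intros) (auto simp: o_def)
  have g_lt_1: "cmod (g u) < 1" if "cmod u < 1" for u
    unfolding g_def using norm_cayley_lt_1 self_map_Im_pos[OF maps] M_in[OF that] z0 by auto
  have "g 0 = 0" by (simp add: g_def M_def)
  define u where "u = (z - z0) / (z - cnj z0)"
  have u: "cmod u < 1" unfolding u_def using norm_cayley_lt_1 z z0 by auto
  have "M u = z"
  proof -
    have d1: "z - cnj z0 \<noteq> 0" and d2: "z0 - cnj z0 \<noteq> 0"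
      using diff_cnj_nonzero z z0 by auto
    have "1 - u = (z0 - cnj z0) / (z - cnj z0)" and "z0 - cnj z0 * u = z * (z0 - cnj z0) / (z - cnj z0)"
      unfolding u_def using d1 by (simp_all add: field_simps)
    then show ?thesis unfolding M_def using d1 d2 by simp
  qed
  with Schwarz_Lemma(1)[OF hol_g \<open>g 0 = 0\<close> g_lt_1 u] show ?thesis
    by (simp add: g_def u_def)
qed

text \<open>Stated without division, so that it survives limits in which \<open>Im (f z)\<close> may tend to 0.\<close>
lemma Schwarz_Pick_half_plane:
  assumes hol: "f holomorphic_on \<bbbH>" and maps: "f ` \<bbbH> \<subseteq> \<bbbH>"
    and z: "0 < Im z" and w: "0 < Im w"
  shows "(cmod (f z - f w))\<^sup>2 * (Im z * Im w) \<le> (cmod (z - w))\<^sup>2 * (Im (f z) * Im (f w))"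
proof -
  have fz: "0 < Im (f z)" and fw: "0 < Im (f w)" using self_map_Im_pos[OF maps] z w by auto
  have "cmod (f z - f w) * cmod (z - cnj w) \<le> cmod (z - w) * cmod (f z - cnj (f w))"
    using Schwarz_Pick_cayley[OF hol maps w z] diff_cnj_nonzero[OF z w] diff_cnj_nonzero[OF fz fw]
    by (simp add: norm_divide field_simps)
  then have "(cmod (f z - f w) * cmod (z - cnj w))\<^sup>2 \<le> (cmod (z - w) * cmod (f z - cnj (f w)))\<^sup>2"
    by (simp add: power_mono)
  then show ?thesis
    by (simp add: power_mult_distrib norm_diff_cnj_sq algebra_simps)
qed

text \<open>On \<open>\<bbbH>\<close>, \<open>hdist z w = 2 (cosh d - 1)\<close> with \<open>d\<close> the hyperbolic distance of \<open>z\<close> and \<open>w\<close>.\<close>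
definition hdist :: "complex \<Rightarrow> complex \<Rightarrow> real" where
  "hdist z w = (cmod (z - w))\<^sup>2 / (Im z * Im w)"

lemma hdist_nonneg: "0 < Im z \<Longrightarrow> 0 < Im w \<Longrightarrow> 0 \<le> hdist z w"
  by (simp add: hdist_def)

lemma norm_diff_sq_eq_hdist:
  "0 < Im z \<Longrightarrow> 0 < Im w \<Longrightarrow> (cmod (z - w))\<^sup>2 = hdist z w * (Im z * Im w)"
  by (simp add: hdist_def)

lemma hdist_divide_of_real:
  assumes "0 < R"
  shows "hdist (z / of_real R) (w / of_real R) = hdist z w"
proof -
  have "z / of_real R - w / of_real R = (z - w) / of_real R"
    by (simp add: diff_divide_distrib)
  then show ?thesis
    using assms unfolding hdist_def by (simp add: norm_divide power2_eq_square field_simps)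
qed

lemma hdist_Schwarz_Pick:
  assumes "f holomorphic_on \<bbbH>" "f ` \<bbbH> \<subseteq> \<bbbH>" "0 < Im z" "0 < Im w"
  shows "hdist (f z) (f w) \<le> hdist z w"
  using Schwarz_Pick_half_plane[OF assms] self_map_Im_pos[OF assms(2)] assms(3,4)
  by (simp add: hdist_def divide_simps mult.commute)

lemma hdist_funpow_le:
  assumes "f holomorphic_on \<bbbH>" "f ` \<bbbH> \<subseteq> \<bbbH>" "0 < Im z" "0 < Im w"
  shows "hdist ((f ^^ n) z) ((f ^^ n) w) \<le> hdist z w"
proof (induction n)
  case (Suc n)
  have "hdist ((f ^^ Suc n) z) ((f ^^ Suc n) w) \<le> hdist ((f ^^ n) z) ((f ^^ n) w)"
    using hdist_Schwarz_Pick[OF assms(1,2)] funpow_self_map_Im_pos[OF assms(2)] assms(3,4) by simp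
  with Suc show ?case by linarith
qed simp

lemma le_of_diff_sq_le:
  fixes a b D :: real
  assumes "0 < a" "0 \<le> b" "(a - b)\<^sup>2 \<le> D * (a * b)"
  shows "a \<le> (2 + D) * b"
proof -
  have "a * a = (a - b)\<^sup>2 + 2 * (a * b) - b * b"
    by (simp add: power2_eq_square algebra_simps)
  also have "\<dots> \<le> D * (a * b) + 2 * (a * b)"
    using assms(3) mult_nonneg_nonneg[OF assms(2) assms(2)] by linarith
  also have "\<dots> = ((2 + D) * b) * a"
    by (simp add: algebra_simps)
  finally show ?thesis using assms(1) by (simp add: mult_right_le_imp_le)
qed

lemma Im_le_hdist:
  assumes "0 < Im a" "0 < Im b"
  shows "Im a \<le> (2 + hdist a b) * Im b"
proof (rule le_of_diff_sq_le)
  have "\<bar>Im a - Im b\<bar> \<le> cmod (a - b)"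
    using abs_Im_le_cmod[of "a - b"] by simp
  then have "(Im a - Im b)\<^sup>2 \<le> (cmod (a - b))\<^sup>2"
    by (metis abs_ge_zero power2_abs power_mono)
  then show "(Im a - Im b)\<^sup>2 \<le> hdist a b * (Im a * Im b)"
    using norm_diff_sq_eq_hdist[OF assms] by simp
qed (use assms in auto)

lemma norm_le_hdist:
  assumes "0 < Im a" "0 < Im b"
  shows "cmod a \<le> (2 + hdist a b) * cmod b"
proof (rule le_of_diff_sq_le)
  have "(cmod a - cmod b)\<^sup>2 \<le> (cmod (a - b))\<^sup>2"
    by (metis abs_ge_zero norm_triangle_ineq3 power2_abs power_mono)
  also have "\<dots> = hdist a b * (Im a * Im b)"
    using norm_diff_sq_eq_hdist[OF assms] .
  also have "\<dots> \<le> hdist a b * (cmod a * cmod b)"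
    using assms abs_Im_le_cmod[of a] abs_Im_le_cmod[of b]
    by (intro mult_left_mono mult_mono hdist_nonneg) auto
  finally show "(cmod a - cmod b)\<^sup>2 \<le> hdist a b * (cmod a * cmod b)" .
qed (use assms in auto)

lemma norm_self_map_ii_le:
  assumes "f holomorphic_on \<bbbH>" "f ` \<bbbH> \<subseteq> \<bbbH>" "0 < R"
  shows "cmod (f (of_real R * \<i>)) \<le> (R + 1 / R) * cmod (f \<i>)"
proof -
  have "hdist (f (of_real R * \<i>)) (f \<i>) \<le> hdist (of_real R * \<i>) \<i>"
    using assms by (intro hdist_Schwarz_Pick) auto
  also have "\<dots> = (R - 1)\<^sup>2 / R"
  proof -
    have "of_real R * \<i> - \<i> = \<i> * of_real (R - 1)" by (simp add: algebra_simps)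
    then have "cmod (of_real R * \<i> - \<i>) = \<bar>R - 1\<bar>"
      by (simp only: norm_mult norm_ii norm_of_real) simp
    then show ?thesis unfolding hdist_def by simp
  qed
  finally have "(2 + hdist (f (of_real R * \<i>)) (f \<i>)) * cmod (f \<i>) \<le> (2 + (R - 1)\<^sup>2 / R) * cmod (f \<i>)"
    by (intro mult_right_mono) auto
  with norm_le_hdist[of "f (of_real R * \<i>)" "f \<i>"] self_map_Im_pos[OF assms(2)] assms(3)
  have "cmod (f (of_real R * \<i>)) \<le> (2 + (R - 1)\<^sup>2 / R) * cmod (f \<i>)"
    by simp
  also have "2 + (R - 1)\<^sup>2 / R = R + 1 / R"
    using assms(3) by (simp add: field_simps power2_eq_square)
  finally show ?thesis .
qed

section \<open>Normal families and limits\<close>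

lemma rescaled_self_map:
  assumes hol: "f holomorphic_on \<bbbH>" and maps: "f ` \<bbbH> \<subseteq> \<bbbH>" and "0 < R" "0 < N"
  shows "(\<lambda>v. f (of_real R * v) / of_real N) holomorphic_on \<bbbH>"
    and "(\<lambda>v. f (of_real R * v) / of_real N) ` \<bbbH> \<subseteq> \<bbbH>"
proof -
  have "(\<lambda>v. of_real R * v) ` \<bbbH> \<subseteq> \<bbbH>" using \<open>0 < R\<close> by auto
  then have "(f \<circ> (\<lambda>v. of_real R * v)) holomorphic_on \<bbbH>"
    by (intro holomorphic_on_compose_gen[OF _ hol]) (auto intro: holomorphic_intros)
  then show "(\<lambda>v. f (of_real R * v) / of_real N) holomorphic_on \<bbbH>"
    using \<open>0 < N\<close> by (intro holomorphic_intros) (auto simp: o_def)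
  show "(\<lambda>v. f (of_real R * v) / of_real N) ` \<bbbH> \<subseteq> \<bbbH>"
    using self_map_Im_pos[OF maps] \<open>0 < R\<close> \<open>0 < N\<close> by auto
qed

lemma self_maps_normal_family:
  fixes F :: "nat \<Rightarrow> complex \<Rightarrow> complex"
  assumes hol: "\<And>k. F k holomorphic_on \<bbbH>" and maps: "\<And>k. F k ` \<bbbH> \<subseteq> \<bbbH>"
    and bound: "\<And>k. cmod (F k \<i>) \<le> C"
  obtains G r where "G holomorphic_on \<bbbH>" "strict_mono r"
    "\<And>v. 0 < Im v \<Longrightarrow> (\<lambda>k. F (r k) v) \<longlonglongrightarrow> G v"
proof -
  have bounded: "\<exists>B. \<forall>h\<in>range F. \<forall>v\<in>K. cmod (h v) \<le> B" if K: "compact K" "K \<subseteq> \<bbbH>" for K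
  proof -
    have "continuous_on K (\<lambda>v. hdist v \<i>)"
      using K(2) unfolding hdist_def by (intro continuous_intros) auto
    then obtain B where B: "\<And>v. v \<in> K \<Longrightarrow> norm (hdist v \<i>) \<le> B"
      using continuous_on_compact_bound[OF K(1)] by blast
    have "cmod (F k v) \<le> (2 + B) * C" if "v \<in> K" for k v
    proof -
      have v: "0 < Im v" using K(2) that by auto
      then have "cmod (F k v) \<le> (2 + hdist (F k v) (F k \<i>)) * cmod (F k \<i>)"
        using self_map_Im_pos[OF maps] by (intro norm_le_hdist) auto
      also have "\<dots> \<le> (2 + B) * C"
      proof (intro mult_mono)
        have "hdist (F k v) (F k \<i>) \<le> hdist v \<i>"
          using v by (intro hdist_Schwarz_Pick hol maps) auto
        then show "2 + hdist (F k v) (F k \<i>) \<le> 2 + B"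
          using B[OF that] by simp
        show "0 \<le> 2 + B" using B[OF that] norm_ge_zero[of "hdist v \<i>"] by linarith
      qed (use bound in auto)
      finally show ?thesis .
    qed
    then show ?thesis by blast
  qed
  obtain G r where "G holomorphic_on \<bbbH>" "strict_mono r"
    "\<And>v. v \<in> \<bbbH> \<Longrightarrow> (\<lambda>k. F (r k) v) \<longlonglongrightarrow> G v"
    "\<And>K. compact K \<Longrightarrow> K \<subseteq> \<bbbH> \<Longrightarrow> uniform_limit K (F \<circ> r) G sequentially"
    by (rule Montel[OF open_upper_half_plane, of "range F" F]) (use hol bounded in auto)
  then show ?thesis using that by simp
qed

lemma self_maps_tendsto_moving_point:
  assumes maps: "\<forall>\<^sub>F k in sequentially. F k holomorphic_on \<bbbH> \<and> F k ` \<bbbH> \<subseteq> \<bbbH>"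
    and v: "v \<longlonglongrightarrow> v0" "0 < Im v0" and lim: "(\<lambda>k. F k v0) \<longlonglongrightarrow> w"
  shows "(\<lambda>k. F k (v k)) \<longlonglongrightarrow> w"
proof -
  define h where "h k = hdist (v k) v0" for k
  have "h \<longlonglongrightarrow> hdist v0 v0"
    unfolding h_def hdist_def using v by (intro tendsto_intros) auto
  then have h: "h \<longlonglongrightarrow> 0" by (simp add: hdist_def)
  have "\<forall>\<^sub>F k in sequentially. 0 < Im (v k)"
    using order_tendstoD(1)[OF tendsto_Im[OF v(1)] v(2)] .
  with maps have "\<forall>\<^sub>F k in sequentially.
      cmod (F k (v k) - F k v0) \<le> sqrt (h k * (2 + h k)) * cmod (F k v0)"
  proof eventually_elim
    case (elim k)
    then have hol: "F k holomorphic_on \<bbbH>" and maps: "F k ` \<bbbH> \<subseteq> \<bbbH>"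
      and vk: "0 < Im (v k)" by auto
    have Fv: "0 < Im (F k (v k))" and Fv0: "0 < Im (F k v0)"
      using self_map_Im_pos[OF maps] vk v(2) by auto
    have hd: "hdist (F k (v k)) (F k v0) \<le> h k"
      unfolding h_def using hol maps vk v(2) by (rule hdist_Schwarz_Pick)
    have h0: "0 \<le> h k" unfolding h_def using vk v(2) by (rule hdist_nonneg)
    have "Im (F k (v k)) \<le> (2 + h k) * cmod (F k v0)"
    proof -
      have "Im (F k (v k)) \<le> cmod (F k (v k))" by (rule Im_le_cmod)
      also have "\<dots> \<le> (2 + hdist (F k (v k)) (F k v0)) * cmod (F k v0)"
        using Fv Fv0 by (rule norm_le_hdist)
      also have "\<dots> \<le> (2 + h k) * cmod (F k v0)"
        using hd by (intro mult_right_mono) auto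
      finally show ?thesis .
    qed
    have "(cmod (F k (v k) - F k v0))\<^sup>2 = hdist (F k (v k)) (F k v0) * (Im (F k (v k)) * Im (F k v0))"
      using Fv Fv0 by (rule norm_diff_sq_eq_hdist)
    also have "\<dots> \<le> h k * (Im (F k (v k)) * Im (F k v0))"
      using hd Fv Fv0 by (intro mult_right_mono) auto
    also have "\<dots> \<le> h k * (((2 + h k) * cmod (F k v0)) * cmod (F k v0))"
      using \<open>Im (F k (v k)) \<le> _\<close> Fv Fv0 h0 Im_le_cmod[of "F k v0"]
      by (intro mult_left_mono mult_mono) auto
    also have "\<dots> = (sqrt (h k * (2 + h k)) * cmod (F k v0))\<^sup>2"
      using h0 by (simp add: power_mult_distrib power2_eq_square)
    finally show ?case
      by (rule power2_le_imp_le) (use h0 in auto)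
  qed
  moreover have "(\<lambda>k. sqrt (h k * (2 + h k)) * cmod (F k v0)) \<longlonglongrightarrow> sqrt (0 * (2 + 0)) * cmod w"
    by (intro tendsto_intros h lim)
  then have "(\<lambda>k. sqrt (h k * (2 + h k)) * cmod (F k v0)) \<longlonglongrightarrow> 0"
    by simp
  ultimately have "(\<lambda>k. F k (v k) - F k v0) \<longlonglongrightarrow> 0"
    by (rule Lim_null_comparison)
  from tendsto_add[OF this lim] show ?thesis by simp
qed

lemma Schwarz_Pick_limit:
  assumes hol: "\<And>k. F k holomorphic_on \<bbbH>" and maps: "\<And>k. F k ` \<bbbH> \<subseteq> \<bbbH>"
    and x: "\<And>k. 0 < Im (x k)" "x \<longlonglongrightarrow> x0" and y: "\<And>k. 0 < Im (y k)" "y \<longlonglongrightarrow> y0"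
    and a: "(\<lambda>k. F k (x k)) \<longlonglongrightarrow> a" and b: "(\<lambda>k. F k (y k)) \<longlonglongrightarrow> b"
  shows "(cmod (a - b))\<^sup>2 * (Im x0 * Im y0) \<le> (cmod (x0 - y0))\<^sup>2 * (Im a * Im b)"
proof (rule LIMSEQ_le)
  show "(\<lambda>k. (cmod (F k (x k) - F k (y k)))\<^sup>2 * (Im (x k) * Im (y k)))
      \<longlonglongrightarrow> (cmod (a - b))\<^sup>2 * (Im x0 * Im y0)"
    by (intro tendsto_intros a b x y)
  show "(\<lambda>k. (cmod (x k - y k))\<^sup>2 * (Im (F k (x k)) * Im (F k (y k))))
      \<longlonglongrightarrow> (cmod (x0 - y0))\<^sup>2 * (Im a * Im b)"
    by (intro tendsto_intros a b x y)
  show "\<exists>N. \<forall>k\<ge>N. (cmod (F k (x k) - F k (y k)))\<^sup>2 * (Im (x k) * Im (y k))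
      \<le> (cmod (x k - y k))\<^sup>2 * (Im (F k (x k)) * Im (F k (y k)))"
    using Schwarz_Pick_half_plane[OF hol maps x(1) y(1)] by blast
qed

lemma holomorphic_Im_nonneg_zero_imp_const:
  assumes hol: "g holomorphic_on \<bbbH>" and nonneg: "\<And>v. 0 < Im v \<Longrightarrow> 0 \<le> Im (g v)"
    and v0: "0 < Im v0" "Im (g v0) = 0" and v: "0 < Im v"
  shows "g v = g v0"
proof (rule ccontr)
  assume "g v \<noteq> g v0"
  then have "\<not> g constant_on \<bbbH>"
    using v v0 unfolding constant_on_def by (metis in_upper_half_plane_iff)
  then have "open (g ` \<bbbH>)"
    using open_mapping_thm[OF hol open_upper_half_plane connected_upper_half_plane
        open_upper_half_plane order_refl] by blast
  moreover have "g v0 \<in> g ` \<bbbH>" using v0 by simp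
  ultimately obtain e where "0 < e" "ball (g v0) e \<subseteq> g ` \<bbbH>"
    by (meson openE)
  moreover have "g v0 - \<i> * of_real (e / 2) \<in> ball (g v0) e"
    using \<open>0 < e\<close> by (simp add: dist_norm norm_mult)
  ultimately obtain u where "0 < Im u" "g u = g v0 - \<i> * of_real (e / 2)"
    by (metis (no_types, lifting) imageE in_upper_half_plane_iff subsetD)
  with nonneg[of u] v0 \<open>0 < e\<close> show False by simp
qed

lemma Im_rescaled_limit_le:
  assumes hol: "f holomorphic_on \<bbbH>" and maps: "f ` \<bbbH> \<subseteq> \<bbbH>"
    and R: "filterlim R at_top sequentially"
    and lim: "(\<lambda>k. f (of_real (R k) * \<i>) / of_real (R k)) \<longlonglongrightarrow> g" and z: "0 < Im z"
  shows "Im g \<le> Im (f z) / Im z"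
proof (rule tendsto_le[OF trivial_limit_sequentially])
  define B where "B k = (2 / R k + (cmod (\<i> - z / of_real (R k)))\<^sup>2 / Im z) * Im (f z)" for k
  have "(\<lambda>k. (2 * inverse (R k) + (cmod (\<i> - z * of_real (inverse (R k))))\<^sup>2 / Im z) * Im (f z))
      \<longlonglongrightarrow> (2 * 0 + (cmod (\<i> - z * of_real 0))\<^sup>2 / Im z) * Im (f z)"
    by (intro tendsto_intros tendsto_inverse_0_at_top[OF R]) (use z in auto)
  then show "B \<longlonglongrightarrow> Im (f z) / Im z"
    by (simp add: B_def[abs_def] divide_inverse mult.commute)
  show "(\<lambda>k. Im (f (of_real (R k) * \<i>) / of_real (R k))) \<longlonglongrightarrow> Im g"
    using lim by (rule tendsto_Im)
  have "\<forall>\<^sub>F k in sequentially. 0 < R k"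
    using R by (simp add: filterlim_at_top_dense)
  then show "\<forall>\<^sub>F k in sequentially. Im (f (of_real (R k) * \<i>) / of_real (R k)) \<le> B k"
  proof eventually_elim
    case (elim k)
    have fz: "0 < Im (f z)" and fR: "0 < Im (f (of_real (R k) * \<i>))"
      using self_map_Im_pos[OF maps] z elim by auto
    have "Im (f (of_real (R k) * \<i>)) \<le> (2 + hdist (f (of_real (R k) * \<i>)) (f z)) * Im (f z)"
      using fR fz by (rule Im_le_hdist)
    also have "\<dots> \<le> (2 + hdist (of_real (R k) * \<i>) z) * Im (f z)"
      using hdist_Schwarz_Pick[OF hol maps, of "of_real (R k) * \<i>" z] elim z fz
      by (intro mult_right_mono) auto
    also have "\<dots> = R k * B k"
    proof -
      have "of_real (R k) * \<i> - z = of_real (R k) * (\<i> - z / of_real (R k))"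
        using elim by (simp add: field_simps)
      then have "cmod (of_real (R k) * \<i> - z) = R k * cmod (\<i> - z / of_real (R k))"
        using elim by (simp add: norm_mult)
      then show ?thesis
        using elim z by (simp add: B_def hdist_def field_simps power2_eq_square)
    qed
    finally show ?case
      using elim by (simp add: Im_divide_of_real field_simps mult.commute)
  qed
qed

lemma norm_rescaled_limit_le:
  assumes hol: "f holomorphic_on \<bbbH>" and maps: "f ` \<bbbH> \<subseteq> \<bbbH>"
    and R: "filterlim R at_top sequentially" and "0 < t"
    and lim: "(\<lambda>k. f (of_real (R k) * (\<i> * of_real t)) / of_real (R k)) \<longlonglongrightarrow> g"
  shows "cmod g \<le> t * cmod (f \<i>)"
proof (rule tendsto_le[OF trivial_limit_sequentially])
  show "(\<lambda>k. cmod (f (of_real (R k) * (\<i> * of_real t)) / of_real (R k))) \<longlonglongrightarrow> cmod g"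
    using lim by (rule tendsto_norm)
  have "(\<lambda>k. (t + inverse (R k) * inverse (R k) / t) * cmod (f \<i>)) \<longlonglongrightarrow> (t + 0 * 0 / t) * cmod (f \<i>)"
    by (intro tendsto_intros tendsto_inverse_0_at_top[OF R]) (use \<open>0 < t\<close> in auto)
  then show "(\<lambda>k. (t + inverse (R k) * inverse (R k) / t) * cmod (f \<i>)) \<longlonglongrightarrow> t * cmod (f \<i>)"
    by simp
  have "\<forall>\<^sub>F k in sequentially. 0 < R k"
    using R by (simp add: filterlim_at_top_dense)
  then show "\<forall>\<^sub>F k in sequentially.
      cmod (f (of_real (R k) * (\<i> * of_real t)) / of_real (R k)) \<le> (t + inverse (R k) * inverse (R k) / t) * cmod (f \<i>)"
  proof eventually_elim
    case (elim k)
    then have "cmod (f (of_real (R k * t) * \<i>)) \<le> (R k * t + 1 / (R k * t)) * cmod (f \<i>)"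
      using \<open>0 < t\<close> by (intro norm_self_map_ii_le[OF hol maps]) auto
    then show ?case
      using elim \<open>0 < t\<close> by (simp add: norm_divide field_simps mult.commute mult.left_commute)
  qed
qed

lemma tendsto_at_top_by_subsequences:
  fixes f :: "real \<Rightarrow> 'a::metric_space"
  assumes sub: "\<And>X. (\<And>k. 1 \<le> X k) \<Longrightarrow> filterlim X at_top sequentially \<Longrightarrow>
      \<exists>r. strict_mono r \<and> (\<lambda>k. f (X (r k))) \<longlonglongrightarrow> L"
  shows "(f \<longlongrightarrow> L) at_top"
proof (rule tendsto_at_topI_sequentially)
  fix X :: "nat \<Rightarrow> real" assume X: "filterlim X at_top sequentially"
  define Y where "Y k = max 1 (X k)" for k
  have Y: "filterlim Y at_top sequentially"
    unfolding Y_def by (rule filterlim_at_top_mono[OF X]) auto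
  have "(\<lambda>k. f (Y k)) \<longlonglongrightarrow> L"
  proof (rule ccontr)
    assume "\<not> ?thesis"
    then obtain e where "0 < e" and "\<exists>\<^sub>F k in sequentially. e \<le> dist (f (Y k)) L"
      unfolding tendsto_iff by (auto simp: not_eventually not_less)
    then have "infinite {k. e \<le> dist (f (Y k)) L}"
      by (simp add: frequently_cofinite flip: cofinite_eq_sequentially)
    then obtain s :: "nat \<Rightarrow> nat" where s: "strict_mono s" "\<And>k. e \<le> dist (f (Y (s k))) L"
      using infinite_enumerate by blast
    have "filterlim (\<lambda>k. Y (s k)) at_top sequentially"
      using filterlim_compose[OF Y filterlim_subseq[OF s(1)]] .
    then obtain r where "(\<lambda>k. f (Y (s (r k)))) \<longlonglongrightarrow> L"
      using sub[of "\<lambda>k. Y (s k)"] by (auto simp: Y_def)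
    then have "\<forall>\<^sub>F k in sequentially. dist (f (Y (s (r k)))) L < e"
      using \<open>0 < e\<close> by (rule tendstoD)
    then obtain k where "dist (f (Y (s (r k)))) L < e"
      by (auto simp: eventually_sequentially)
    with s(2)[of "r k"] show False by simp
  qed
  moreover have "\<forall>\<^sub>F k in sequentially. 1 \<le> X k"
    using X by (simp add: filterlim_at_top)
  then have "\<forall>\<^sub>F k in sequentially. f (Y k) = f (X k)"
    by eventually_elim (simp add: Y_def)
  ultimately show "(\<lambda>k. f (X k)) \<longlonglongrightarrow> L"
    by (rule Lim_transform_eventually)
qed

lemma filterlim_at_top_by_dilation_ratio:
  fixes N :: "real \<Rightarrow> real"
  assumes A: "1 < A" and c: "1 < c" and "0 < R0"
    and cont: "continuous_on {R0..} N" and pos: "\<And>R. R0 \<le> R \<Longrightarrow> 0 < N R"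
    and ratio: "\<And>R. R0 \<le> R \<Longrightarrow> c * N R \<le> N (A * R)"
  shows "filterlim N at_top at_top"
proof -
  have "R0 \<le> A * R0" using A \<open>0 < R0\<close> by simp
  moreover have "continuous_on {R0..A * R0} N"
    using cont by (rule continuous_on_subset) auto
  ultimately have "\<exists>x\<in>{R0..A * R0}. \<forall>y\<in>{R0..A * R0}. N x \<le> N y"
    by (intro continuous_attains_inf[OF compact_Icc]) auto
  then obtain x where x: "x \<in> {R0..A * R0}" and min: "\<And>y. y \<in> {R0..A * R0} \<Longrightarrow> N x \<le> N y"
    by blast
  define m where "m = N x"
  have "0 < m" unfolding m_def using x pos by simp
  have step: "N (R / A) \<le> N R" if "R0 \<le> R / A" for R
  proof -
    have "N (R / A) \<le> c * N (R / A)" using c pos[OF that] by simp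
    also have "\<dots> \<le> N (A * (R / A))" using ratio[OF that] .
    finally show ?thesis using A by simp
  qed
  have base: "m \<le> N R" if "R0 \<le> R" "R \<le> A ^ j * R0" for j R
    using that
  proof (induction j arbitrary: R)
    case (Suc j)
    show ?case
    proof (cases "R \<le> A * R0")
      case True
      with Suc.prems show ?thesis unfolding m_def by (intro min) simp
    next
      case False
      then have "R0 \<le> R / A" "R / A \<le> A ^ j * R0"
        using Suc.prems A by (simp_all add: field_simps)
      with Suc.IH step show ?thesis by fastforce
    qed
  qed (use min \<open>R0 \<le> A * R0\<close> in \<open>simp add: m_def\<close>)
  have grow: "c ^ n * m \<le> N R" if "A ^ n * R0 \<le> R" for n R
    using that
  proof (induction n arbitrary: R)
    case 0
    obtain j where "R / R0 < A ^ j" using real_arch_pow[OF A] by blast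
    then have "R \<le> A ^ j * R0" using 0 \<open>0 < R0\<close> by (simp add: field_simps)
    with 0 show ?case using base[of R j] by simp
  next
    case (Suc n)
    then have IH: "c ^ n * m \<le> N (R / A)" using A by (intro Suc.IH) (simp add: field_simps)
    have "R0 \<le> A ^ n * R0" using A \<open>0 < R0\<close> by simp
    also have "\<dots> \<le> R / A" using Suc.prems A by (simp add: field_simps)
    finally have "c * N (R / A) \<le> N R" using ratio[of "R / A"] A by simp
    moreover have "c ^ Suc n * m \<le> c * N (R / A)" using IH c by simp
    ultimately show ?case by linarith
  qed
  show ?thesis
    unfolding filterlim_at_top eventually_at_top_linorder
  proof
    fix Z :: real
    obtain n where "Z / m < c ^ n" using real_arch_pow[OF c] by blast
    then have "Z \<le> c ^ n * m" using \<open>0 < m\<close> by (simp add: field_simps)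
    with grow show "\<exists>R1. \<forall>R\<ge>R1. Z \<le> N R" by (meson order_trans)
  qed
qed

lemma tendsto_mult_pos_real_imp_pos_real:
  fixes c :: complex
  assumes pos: "\<And>k. 0 < \<rho> k" and lim: "(\<lambda>k. c * of_real (\<rho> k)) \<longlonglongrightarrow> 1"
  obtains \<mu> where "0 < \<mu>" "c = of_real \<mu>"
proof -
  have "c \<noteq> 0"
  proof
    assume "c = 0"
    with lim have "(\<lambda>k. 0 :: complex) \<longlonglongrightarrow> 1" by simp
    then show False by (simp add: LIMSEQ_const_iff)
  qed
  then have "(\<lambda>k. of_real (\<rho> k) :: complex) \<longlonglongrightarrow> 1 / c"
    using tendsto_divide[OF lim tendsto_const[of c]] by simp
  then have "\<rho> \<longlonglongrightarrow> Re (1 / c)" and Im: "Im (1 / c) = 0"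
    using tendsto_Re tendsto_Im[of _ "1 / c"] by (fastforce simp: LIMSEQ_const_iff)+
  then have "0 \<le> Re (1 / c)"
    using pos by (intro LIMSEQ_le_const) (auto intro: less_imp_le)
  moreover have "Re (1 / c) \<noteq> 0"
  proof
    assume "Re (1 / c) = 0"
    with Im have "1 / c = 0" by (intro complex_eqI) simp_all
    with \<open>c \<noteq> 0\<close> show False by simp
  qed
  ultimately have "0 < 1 / Re (1 / c)" by simp
  moreover have "c = of_real (1 / Re (1 / c))"
  proof -
    have "1 / c = of_real (Re (1 / c))" using Im by (intro complex_eqI) simp_all
    then have "1 / (1 / c) = 1 / of_real (Re (1 / c))" by (rule arg_cong)
    then show ?thesis by simp
  qed
  ultimately show ?thesis using that by blast
qed

section \<open>Self-maps commuting with a dilation\<close>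

lemma sin_le_sin_iff_dist_pi_half:
  fixes x y :: real
  assumes "0 \<le> x" "x \<le> pi" "0 \<le> y" "y \<le> pi"
  shows "sin x \<le> sin y \<longleftrightarrow> \<bar>y - pi / 2\<bar> \<le> \<bar>x - pi / 2\<bar>"
proof -
  have sin_eq: "sin t = cos \<bar>t - pi / 2\<bar>" for t :: real
    by (simp add: cos_diff)
  show ?thesis
    unfolding sin_eq by (rule cos_mono_le_eq) (use assms in auto)
qed

lemma dist_Arg_pi_half_le:
  assumes v: "0 < Im v" and w: "0 < Im w" and le: "cmod w * Im v \<le> cmod v * Im w"
  shows "\<bar>Arg w - pi / 2\<bar> \<le> \<bar>Arg v - pi / 2\<bar>"
proof -
  have "v \<noteq> 0" "w \<noteq> 0" using v w by auto
  then have "sin (Arg v) \<le> sin (Arg w)"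
    using le by (simp add: sin_Arg field_simps)
  moreover have "0 < Arg v" "Arg v < pi" "0 < Arg w" "Arg w < pi"
    using Arg_lt_pi v w by blast+
  ultimately show ?thesis
    by (subst (asm) sin_le_sin_iff_dist_pi_half) auto
qed

lemma antimono_periodic_imp_const:
  fixes f :: "real \<Rightarrow> real"
  assumes mono: "\<And>x y. x \<le> y \<Longrightarrow> f y \<le> f x" and "0 < T" and periodic: "\<And>x. f (x + T) = f x"
  shows "f x = f 0"
proof -
  have shift: "f (y + real n * T) = f y" for y n
  proof (induction n)
    case (Suc n)
    have "f (y + real (Suc n) * T) = f (y + real n * T + T)" by (simp add: algebra_simps)
    with Suc show ?case by (simp add: periodic)
  qed simp
  obtain n where n: "\<bar>x\<bar> < real n * T"
    using ex_less_of_nat_mult[OF \<open>0 < T\<close>] by blast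
  have "f (real n * T) \<le> f x" "f x \<le> f (- real n * T)"
    using n by (auto intro: mono)
  moreover have "f (- real n * T) = f 0" "f (real n * T) = f 0"
    using shift[of "- real n * T" n] shift[of 0 n] by simp_all
  ultimately show ?thesis by simp
qed

lemma has_field_derivative_along_line:
  fixes P :: "complex \<Rightarrow> complex"
  assumes "(P has_field_derivative d) (at (a + of_real t * u))"
  shows "((\<lambda>s. Re (P (a + of_real s * u))) has_real_derivative Re (d * u)) (at t)"
    and "((\<lambda>s. Im (P (a + of_real s * u))) has_real_derivative Im (d * u)) (at t)"
proof -
  have "((\<lambda>s. a + of_real s * u) has_derivative (\<lambda>s. of_real s * u)) (at t)"
    by (auto intro!: derivative_eq_intros)
  from has_derivative_compose[OF this assms[unfolded has_field_derivative_def]]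
  have P: "((\<lambda>s. P (a + of_real s * u)) has_derivative (\<lambda>s. d * (of_real s * u))) (at t)"
    by simp
  have "(\<lambda>s. Re (d * (of_real s * u))) = (*) (Re (d * u))"
    and "(\<lambda>s. Im (d * (of_real s * u))) = (*) (Im (d * u))"
    by (simp_all add: fun_eq_iff algebra_simps)
  with has_derivative_Re[OF P] has_derivative_Im[OF P]
  show "((\<lambda>s. Re (P (a + of_real s * u))) has_real_derivative Re (d * u)) (at t)"
    and "((\<lambda>s. Im (P (a + of_real s * u))) has_real_derivative Im (d * u)) (at t)"
    unfolding has_field_derivative_def by simp_all
qed

lemma Re_deriv_nonpos_if_Im_nonpos_above:
  fixes P :: "complex \<Rightarrow> complex"
  assumes deriv: "(P has_field_derivative d) (at a)" and "Im (P a) = 0" and "0 < e"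
    and above: "\<And>h. 0 < h \<Longrightarrow> h < e \<Longrightarrow> Im (P (a + of_real h * \<i>)) \<le> 0"
  shows "Re d \<le> 0"
proof (rule ccontr)
  assume "\<not> Re d \<le> 0"
  then have "0 < Im (d * \<i>)" by simp
  moreover have "((\<lambda>s. Im (P (a + of_real s * \<i>))) has_real_derivative Im (d * \<i>)) (at 0)"
    using has_field_derivative_along_line(2)[of P d a 0 \<i>] deriv by simp
  ultimately obtain e' where "0 < e'"
    and inc: "\<And>h. 0 < h \<Longrightarrow> h < e' \<Longrightarrow> Im (P (a + of_real 0 * \<i>)) < Im (P (a + of_real (0 + h) * \<i>))"
    using DERIV_pos_inc_right by blast
  define h where "h = min e e' / 2"
  have "0 < h" "h < e" "h < e'" using \<open>0 < e\<close> \<open>0 < e'\<close> by (auto simp: h_def)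
  with inc[of h] above[of h] \<open>Im (P a) = 0\<close> show False by simp
qed

lemma holomorphic_eq_const_on_line:
  assumes hol: "P holomorphic_on S" and "open S" "connected S"
    and line: "\<And>x. a + of_real x \<in> S" and const: "\<And>x. P (a + of_real x) = c" and "z \<in> S"
  shows "P z = c"
proof -
  have limpt: "a islimpt range (\<lambda>x. a + of_real x)"
    unfolding islimpt_approachable
  proof (intro allI impI)
    fix e :: real assume "0 < e"
    then have "a + of_real (e / 2) \<noteq> a" "dist (a + of_real (e / 2)) a < e"
      by (simp_all add: dist_norm)
    then show "\<exists>x'\<in>range (\<lambda>x. a + of_real x). x' \<noteq> a \<and> dist x' a < e" by blast
  qed
  have "P z - c = 0"
  proof (rule analytic_continuation[of "\<lambda>z. P z - c" S "range (\<lambda>x. a + of_real x)" a])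
    show "(\<lambda>z. P z - c) holomorphic_on S" using hol by (intro holomorphic_intros)
    show "a \<in> S" using line[of 0] by simp
  qed (use assms(2,3) limpt line const \<open>z \<in> S\<close> in auto)
  then show ?thesis by simp
qed

text \<open>The sign condition makes \<open>P\<close> real on the midline and, by the Cauchy--Riemann equations,
  decreasing along it; periodicity then forces it to be constant there.\<close>
lemma periodic_strip_function_const:
  fixes P :: "complex \<Rightarrow> complex"
  assumes hol: "P holomorphic_on {\<zeta>. 0 < Im \<zeta> \<and> Im \<zeta> < pi}" and "0 < T"
    and periodic: "\<And>\<zeta>. 0 < Im \<zeta> \<Longrightarrow> Im \<zeta> < pi \<Longrightarrow> P (\<zeta> + of_real T) = P \<zeta>"
    and above: "\<And>\<zeta>. pi / 2 \<le> Im \<zeta> \<Longrightarrow> Im \<zeta> < pi \<Longrightarrow> Im (P \<zeta>) \<le> 0"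
    and below: "\<And>\<zeta>. 0 < Im \<zeta> \<Longrightarrow> Im \<zeta> \<le> pi / 2 \<Longrightarrow> 0 \<le> Im (P \<zeta>)"
  obtains c where "\<And>\<zeta>. 0 < Im \<zeta> \<Longrightarrow> Im \<zeta> < pi \<Longrightarrow> P \<zeta> = of_real c"
proof -
  define S where "S = {\<zeta>. 0 < Im \<zeta> \<and> Im \<zeta> < pi}"
  have "open S"
    unfolding S_def by (simp add: open_Collect_conj open_halfspace_Im_gt open_halfspace_Im_lt)
  have "S = {\<zeta>. 0 < Im \<zeta>} \<inter> {\<zeta>. Im \<zeta> < pi}" by (auto simp: S_def)
  then have "connected S"
    by (metis convex_Int convex_connected convex_halfspace_Im_gt convex_halfspace_Im_lt)
  define b where "b x = \<i> * of_real (pi / 2) + of_real x" for x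
  have b_in: "b x \<in> S" for x by (simp add: b_def S_def)
  have Im_P_b: "Im (P (b x)) = 0" for x
    using above[of "b x"] below[of "b x"] by (simp add: b_def)
  have deriv_P: "(P has_field_derivative deriv P \<zeta>) (at \<zeta>)" if "\<zeta> \<in> S" for \<zeta>
    using hol \<open>open S\<close> that unfolding S_def by (rule holomorphic_derivI)
  have Re_deriv_P: "Re (deriv P (b x)) \<le> 0" for x
  proof (rule Re_deriv_nonpos_if_Im_nonpos_above[OF deriv_P[OF b_in] Im_P_b])
    fix h :: real assume "0 < h" "h < pi / 2"
    then show "Im (P (b x + of_real h * \<i>)) \<le> 0"
      by (intro above) (simp_all add: b_def)
  qed simp
  define f where "f x = Re (P (b x))" for x
  have "(f has_real_derivative Re (deriv P (b x))) (at x)" for x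
    using has_field_derivative_along_line(1)[of P _ "\<i> * of_real (pi / 2)" x 1] deriv_P[OF b_in]
    by (simp add: f_def[abs_def] b_def)
  then have "f y \<le> f x" if "x \<le> y" for x y
    using DERIV_nonpos_imp_nonincreasing[OF that] Re_deriv_P by blast
  moreover have "f (x + T) = f x" for x
    using periodic[of "b x"] by (simp add: f_def b_def add.assoc)
  ultimately have "f x = f 0" for x
    using antimono_periodic_imp_const \<open>0 < T\<close> by blast
  then have P_b: "P (b x) = of_real (f 0)" for x
    using Im_P_b[of x] by (simp add: f_def complex_eq_iff)
  have "P \<zeta> = of_real (f 0)" if "\<zeta> \<in> S" for \<zeta>
    using hol \<open>open S\<close> \<open>connected S\<close> b_in P_b that unfolding b_def S_def
    by (rule holomorphic_eq_const_on_line)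
  with that show ?thesis by (auto simp: S_def)
qed

text \<open>In the coordinate \<open>\<zeta> = Ln v\<close> the dilation \<open>v \<mapsto> A v\<close> becomes the translation by
  \<open>ln A\<close>, and the hypothesis on \<open>Arg\<close> controls the sign of \<open>Im (Ln (G v) - Ln v)\<close>.\<close>
lemma self_map_eq_dilation:
  fixes G :: "complex \<Rightarrow> complex" and A :: real
  assumes hol: "G holomorphic_on \<bbbH>" and maps: "G ` \<bbbH> \<subseteq> \<bbbH>" and "1 < A"
    and homogeneous: "\<And>v. 0 < Im v \<Longrightarrow> G (of_real A * v) = of_real A * G v"
    and Arg_closer: "\<And>v. 0 < Im v \<Longrightarrow> \<bar>Arg (G v) - pi / 2\<bar> \<le> \<bar>Arg v - pi / 2\<bar>"
  obtains \<mu> where "0 < \<mu>" "\<And>v. 0 < Im v \<Longrightarrow> G v = of_real \<mu> * v"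
proof -
  define S where "S = {\<zeta>. 0 < Im \<zeta> \<and> Im \<zeta> < pi}"
  have exp_in: "0 < Im (exp \<zeta>)" and Arg_exp: "Arg (exp \<zeta>) = Im \<zeta>" if "\<zeta> \<in> S" for \<zeta>
    using that by (auto simp: S_def Im_exp sin_gt_zero intro!: Arg_exp)
  have G_exp_in: "0 < Im (G (exp \<zeta>))" if "\<zeta> \<in> S" for \<zeta>
    using self_map_Im_pos[OF maps exp_in[OF that]] .
  then have G_exp_nonzero: "G (exp \<zeta>) \<noteq> 0" if "\<zeta> \<in> S" for \<zeta>
    using that by fastforce
  define P where "P \<zeta> = Ln (G (exp \<zeta>)) - \<zeta>" for \<zeta>
  have "exp ` S \<subseteq> \<bbbH>" using exp_in by auto
  then have "(\<lambda>\<zeta>. G (exp \<zeta>)) holomorphic_on S"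
    using holomorphic_on_compose_gen[OF holomorphic_on_exp hol, of S] by (simp add: o_def)
  then have hol_P: "P holomorphic_on S"
    unfolding P_def using G_exp_in
    by (intro holomorphic_intros holomorphic_on_Ln') (fastforce simp: complex_nonpos_Reals_iff)+
  have periodic: "P (\<zeta> + of_real (ln A)) = P \<zeta>" if "\<zeta> \<in> S" for \<zeta>
  proof -
    have "exp (\<zeta> + of_real (ln A)) = of_real A * exp \<zeta>"
      using \<open>1 < A\<close> by (simp add: exp_add exp_of_real mult.commute)
    then have "G (exp (\<zeta> + of_real (ln A))) = of_real A * G (exp \<zeta>)"
      using homogeneous[OF exp_in[OF that]] by simp
    then have "Ln (G (exp (\<zeta> + of_real (ln A)))) = of_real (ln A) + Ln (G (exp \<zeta>))"
      using Ln_times_of_real[of A "G (exp \<zeta>)"] \<open>1 < A\<close> G_exp_nonzero[OF that]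
      by (simp add: Ln_of_real)
    then show ?thesis by (simp add: P_def)
  qed
  have Im_P: "Im (P \<zeta>) = Arg (G (exp \<zeta>)) - Im \<zeta>" if "\<zeta> \<in> S" for \<zeta>
    using Arg_eq_Im_Ln[OF G_exp_nonzero[OF that]] by (simp add: P_def)
  have sign: "(pi / 2 \<le> Im \<zeta> \<longrightarrow> Im (P \<zeta>) \<le> 0) \<and> (Im \<zeta> \<le> pi / 2 \<longrightarrow> 0 \<le> Im (P \<zeta>))"
    if "\<zeta> \<in> S" for \<zeta>
    using Arg_closer[OF exp_in[OF that]] unfolding Im_P[OF that] Arg_exp[OF that] by arith
  obtain c where P_const: "\<And>\<zeta>. 0 < Im \<zeta> \<Longrightarrow> Im \<zeta> < pi \<Longrightarrow> P \<zeta> = of_real c"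
  proof (rule periodic_strip_function_const[of P "ln A"])
    show "P holomorphic_on {\<zeta>. 0 < Im \<zeta> \<and> Im \<zeta> < pi}" using hol_P by (simp add: S_def)
  qed (use periodic sign \<open>1 < A\<close> in \<open>auto simp: S_def\<close>)
  show ?thesis
  proof
    fix v :: complex assume v: "0 < Im v"
    then have "v \<noteq> 0" by auto
    have "Ln (G v) = of_real c + Ln v"
      using P_const[of "Ln v"] Im_Ln_pos_lt_imp[of v] v \<open>v \<noteq> 0\<close> by (simp add: P_def algebra_simps)
    then have "exp (Ln (G v)) = exp (of_real c) * v"
      by (simp add: exp_add \<open>v \<noteq> 0\<close>)
    moreover have "G v \<noteq> 0" using self_map_Im_pos[OF maps v] by auto
    ultimately show "G v = of_real (exp c) * v" by (simp add: exp_of_real)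
  qed simp
qed

section \<open>Sectors\<close>

lemma sector_Im_ge:
  assumes "z \<in> sector \<delta>" "0 < \<delta>"
  shows "\<delta> < pi / 2" and "z \<noteq> 0" and "sin \<delta> * cmod z \<le> Im z"
proof -
  have Arg: "\<bar>Arg z - pi / 2\<bar> < pi / 2 - \<delta>" using assms(1) by (simp add: sector_def)
  then show "\<delta> < pi / 2" by linarith
  show "z \<noteq> 0" using Arg assms(2) by (auto simp: Arg_zero)
  moreover have "sin \<delta> \<le> sin (Arg z)"
    using Arg assms(2) by (subst sin_le_sin_iff_dist_pi_half) auto
  ultimately show "sin \<delta> * cmod z \<le> Im z"
    by (simp add: sin_Arg pos_le_divide_eq)
qed

lemma tendsto_sector_at_infinityI:
  fixes f :: "complex \<Rightarrow> 'a::metric_space"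
  assumes "0 < \<delta>"
    and seq: "\<And>z w. (\<And>k. z k \<in> sector \<delta>) \<Longrightarrow> filterlim (\<lambda>k. cmod (z k)) at_top sequentially \<Longrightarrow>
      0 < Im w \<Longrightarrow> (\<lambda>k. sgn (z k)) \<longlonglongrightarrow> w \<Longrightarrow> (\<lambda>k. f (z k)) \<longlonglongrightarrow> L"
  shows "(f \<longlongrightarrow> L) (sector_at_infinity \<delta>)"
proof (rule tendstoI)
  fix e :: real assume "0 < e"
  show "\<forall>\<^sub>F z in sector_at_infinity \<delta>. dist (f z) L < e"
  proof (rule ccontr)
    assume "\<not> ?thesis"
    then have "\<forall>k::nat. \<exists>z. real k \<le> cmod z \<and> z \<in> sector \<delta> \<and> e \<le> dist (f z) L"
      unfolding sector_at_infinity_def eventually_inf_principal eventually_at_infinity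
      by (meson not_le)
    then obtain z where "\<forall>k. real k \<le> cmod (z k) \<and> z k \<in> sector \<delta> \<and> e \<le> dist (f (z k)) L"
      by (rule choice[THEN exE])
    then have z: "\<And>k. real k \<le> cmod (z k)" "\<And>k. z k \<in> sector \<delta>" "\<And>k. e \<le> dist (f (z k)) L"
      by auto
    have "bounded (range (\<lambda>k. sgn (z k)))"
      by (auto simp: bounded_iff norm_sgn intro!: exI[of _ 1])
    then obtain w r where r: "strict_mono r" and w: "((\<lambda>k. sgn (z k)) \<circ> r) \<longlonglongrightarrow> w"
      using bounded_imp_convergent_subsequence by blast
    have "sin \<delta> \<le> Im (sgn (z k))" for k
      using sector_Im_ge[OF z(2) \<open>0 < \<delta>\<close>] by (simp add: Im_sgn pos_le_divide_eq)
    then have "sin \<delta> \<le> Im w"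
      using tendsto_Im[OF w] by (intro LIMSEQ_le_const) (auto simp: o_def)
    moreover have "0 < sin \<delta>"
      using sector_Im_ge(1)[OF z(2) \<open>0 < \<delta>\<close>] \<open>0 < \<delta>\<close> by (intro sin_gt_zero) auto
    ultimately have "0 < Im w" by linarith
    moreover have "filterlim (\<lambda>k. cmod (z (r k))) at_top sequentially"
    proof (rule filterlim_at_top_mono[OF filterlim_real_sequentially])
      have "real k \<le> cmod (z (r k))" for k
        using z(1)[of "r k"] seq_suble[OF r, of k] by linarith
      then show "\<forall>\<^sub>F k in sequentially. real k \<le> cmod (z (r k))" by simp
    qed
    moreover have "(\<lambda>k. sgn (z (r k))) \<longlonglongrightarrow> w"
      using w by (simp add: o_def)
    ultimately have "(\<lambda>k. f (z (r k))) \<longlonglongrightarrow> L"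
      using seq[of "\<lambda>k. z (r k)" w] z(2) by blast
    then have "\<forall>\<^sub>F k in sequentially. dist (f (z (r k))) L < e"
      using \<open>0 < e\<close> by (rule tendstoD)
    then obtain k where "dist (f (z (r k))) L < e"
      by (auto simp: eventually_sequentially)
    with z(3)[of "r k"] show False by simp
  qed
qed

section \<open>Hyperbolic self-maps with Denjoy--Wolff point at infinity\<close>

locale hyperbolic_self_map =
  fixes \<Phi> :: "complex \<Rightarrow> complex" and A :: real
  assumes holomorphic: "\<Phi> holomorphic_on \<bbbH>" and self_map: "\<Phi> ` \<bbbH> \<subseteq> \<bbbH>"
    and A_eq_Inf: "A = (INF z\<in>\<bbbH>. Im (\<Phi> z) / Im z)" and A_gt_1: "1 < A"
begin

lemma A_le_Im_Phi:
  assumes "0 < Im z"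
  shows "A * Im z \<le> Im (\<Phi> z)"
proof -
  have "bdd_below ((\<lambda>z. Im (\<Phi> z) / Im z) ` \<bbbH>)"
    using self_map_Im_pos[OF self_map] by (intro bdd_belowI[of _ 0]) (auto intro: less_imp_le)
  then have "A \<le> Im (\<Phi> z) / Im z"
    unfolding A_eq_Inf using assms by (intro cINF_lower) auto
  then show ?thesis using assms by (simp add: pos_le_divide_eq)
qed

lemma le_A:
  assumes "\<And>z. 0 < Im z \<Longrightarrow> c \<le> Im (\<Phi> z) / Im z"
  shows "c \<le> A"
proof -
  have "\<i> \<in> \<bbbH>" by simp
  then have "\<bbbH> \<noteq> {}" by blast
  then show ?thesis unfolding A_eq_Inf by (rule cINF_greatest) (use assms in auto)
qed

text \<open>A form of the Julia--Caratheodory theorem at the Denjoy--Wolff point \<open>\<infinity>\<close>.\<close>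
lemma Phi_rescaled_limit_eq:
  assumes R: "filterlim R at_top sequentially" "\<And>k. 0 < R k" and G_hol: "G holomorphic_on \<bbbH>"
    and G_lim: "\<And>v. 0 < Im v \<Longrightarrow> (\<lambda>k. \<Phi> (of_real (R k) * v) / of_real (R k)) \<longlonglongrightarrow> G v"
    and v: "0 < Im v"
  shows "G v = of_real A * v"
proof -
  have Im_G: "A * Im w \<le> Im (G w)" if "0 < Im w" for w
  proof (rule LIMSEQ_le_const[OF tendsto_Im[OF G_lim[OF that]]])
    have "A * Im w \<le> Im (\<Phi> (of_real (R k) * w) / of_real (R k))" for k
    proof -
      have "A * (R k * Im w) \<le> Im (\<Phi> (of_real (R k) * w))"
        using A_le_Im_Phi[of "of_real (R k) * w"] that R(2)[of k] by simp
      then show ?thesis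
        using R(2)[of k] by (simp add: Im_divide_of_real pos_le_divide_eq mult_ac)
    qed
    then show "\<exists>N. \<forall>k\<ge>N. A * Im w \<le> Im (\<Phi> (of_real (R k) * w) / of_real (R k))" by blast
  qed
  have "Im (G \<i>) \<le> A"
    using Im_rescaled_limit_le[OF holomorphic self_map R(1) G_lim[of \<i>]] by (intro le_A) simp
  define E where "E w = G w - of_real A * w" for w
  have "E holomorphic_on \<bbbH>" unfolding E_def using G_hol by (intro holomorphic_intros)
  moreover have "0 \<le> Im (E w)" if "0 < Im w" for w using Im_G[OF that] by (simp add: E_def)
  moreover have "Im (E \<i>) = 0" using Im_G[of \<i>] \<open>Im (G \<i>) \<le> A\<close> by (simp add: E_def)
  ultimately have E_const: "E w = E \<i>" if "0 < Im w" for w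
    using holomorphic_Im_nonneg_zero_imp_const[of E \<i> w] that by simp
  have bound: "\<bar>Re (E \<i>)\<bar> \<le> t * cmod (\<Phi> \<i>)" if "0 < t" for t
  proof -
    have "cmod (G (\<i> * of_real t)) \<le> t * cmod (\<Phi> \<i>)"
      using norm_rescaled_limit_le[OF holomorphic self_map R(1) that] G_lim[of "\<i> * of_real t"] that
      by simp
    moreover have "Re (E \<i>) = Re (G (\<i> * of_real t))"
      using arg_cong[OF E_const[of "\<i> * of_real t"], of Re] that by (simp add: E_def)
    ultimately show ?thesis using abs_Re_le_cmod[of "G (\<i> * of_real t)"] by linarith
  qed
  have "0 < cmod (\<Phi> \<i>)" using self_map_Im_pos[OF self_map, of \<i>] by auto
  have "Re (E \<i>) = 0"
  proof (rule ccontr)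
    assume "Re (E \<i>) \<noteq> 0"
    define t where "t = \<bar>Re (E \<i>)\<bar> / (2 * cmod (\<Phi> \<i>))"
    have "0 < t" using \<open>Re (E \<i>) \<noteq> 0\<close> \<open>0 < cmod (\<Phi> \<i>)\<close> by (simp add: t_def)
    then have "\<bar>Re (E \<i>)\<bar> \<le> \<bar>Re (E \<i>)\<bar> / 2"
      using bound[of t] \<open>0 < cmod (\<Phi> \<i>)\<close> by (simp add: t_def)
    with \<open>Re (E \<i>) \<noteq> 0\<close> show False by simp
  qed
  with \<open>Im (E \<i>) = 0\<close> have "E v = 0"
    using E_const[OF v] by (simp add: complex_eq_iff)
  then show ?thesis by (simp add: E_def)
qed

lemma Phi_rescaled_subseq:
  assumes R1: "\<And>k. 1 \<le> R k" and R: "filterlim R at_top sequentially"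
  obtains r where "strict_mono r"
    "\<And>v. 0 < Im v \<Longrightarrow> (\<lambda>k. \<Phi> (of_real (R (r k)) * v) / of_real (R (r k))) \<longlonglongrightarrow> of_real A * v"
proof -
  define F where "F k v = \<Phi> (of_real (R k) * v) / of_real (R k)" for k v
  have R0: "0 < R k" for k using R1[of k] by linarith
  have F_hol: "F k holomorphic_on \<bbbH>" and F_maps: "F k ` \<bbbH> \<subseteq> \<bbbH>" for k
    unfolding F_def using rescaled_self_map[OF holomorphic self_map R0 R0] by blast+
  have bound: "cmod (F k \<i>) \<le> 2 * cmod (\<Phi> \<i>)" for k
  proof -
    have "cmod (\<Phi> (of_real (R k) * \<i>)) \<le> (R k + 1 / R k) * cmod (\<Phi> \<i>)"
      using R0 by (intro norm_self_map_ii_le[OF holomorphic self_map])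
    also have "\<dots> \<le> (2 * R k) * cmod (\<Phi> \<i>)"
    proof (rule mult_right_mono)
      have "1 / R k \<le> 1" using R1[of k] by simp
      then show "R k + 1 / R k \<le> 2 * R k" using R1[of k] by linarith
    qed simp
    finally show ?thesis using R0[of k] by (simp add: F_def norm_divide field_simps)
  qed
  obtain G r where G_hol: "G holomorphic_on \<bbbH>" and "strict_mono r"
    and G_lim: "\<And>v. 0 < Im v \<Longrightarrow> (\<lambda>k. F (r k) v) \<longlonglongrightarrow> G v"
    by (rule self_maps_normal_family[of F, OF F_hol F_maps bound]) auto
  have Rr: "filterlim (\<lambda>k. R (r k)) at_top sequentially"
    using filterlim_compose[OF R filterlim_subseq[OF \<open>strict_mono r\<close>]] .
  have "G v = of_real A * v" if "0 < Im v" for v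
    using Rr R0 G_hol G_lim that unfolding F_def
    by (rule Phi_rescaled_limit_eq[of "\<lambda>k. R (r k)" G v])
  with G_lim show ?thesis
    by (intro that[OF \<open>strict_mono r\<close>]) (simp add: F_def)
qed

lemma Phi_rescaled_tendsto:
  assumes "0 < Im v"
  shows "((\<lambda>R. \<Phi> (of_real R * v) / of_real R) \<longlongrightarrow> of_real A * v) at_top"
proof (rule tendsto_at_top_by_subsequences)
  fix X :: "nat \<Rightarrow> real" assume "\<And>k. 1 \<le> X k" "filterlim X at_top sequentially"
  then obtain r where "strict_mono r"
    "\<And>v. 0 < Im v \<Longrightarrow> (\<lambda>k. \<Phi> (of_real (X (r k)) * v) / of_real (X (r k))) \<longlonglongrightarrow> of_real A * v"
    by (rule Phi_rescaled_subseq[of X]) auto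
  with assms show "\<exists>r. strict_mono r \<and>
      (\<lambda>k. \<Phi> (of_real (X (r k)) * v) / of_real (X (r k))) \<longlonglongrightarrow> of_real A * v"
    by blast
qed

section \<open>Solutions of Schroeder's equation\<close>

definition Schroeder_solution :: "(complex \<Rightarrow> complex) \<Rightarrow> bool" where
  "Schroeder_solution \<sigma> \<longleftrightarrow>
     \<sigma> holomorphic_on \<bbbH> \<and> \<sigma> ` \<bbbH> \<subseteq> \<bbbH> \<and> (\<forall>z\<in>\<bbbH>. \<sigma> (\<Phi> z) = of_real A * \<sigma> z)"

lemma Schroeder_funpow:
  assumes "Schroeder_solution \<sigma>" "0 < Im z"
  shows "\<sigma> ((\<Phi> ^^ n) z) = of_real (A ^ n) * \<sigma> z"
proof (induction n)
  case (Suc n)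
  have "0 < Im ((\<Phi> ^^ n) z)" using funpow_self_map_Im_pos[OF self_map assms(2)] .
  with Suc assms(1) show ?case by (simp add: Schroeder_solution_def)
qed simp

lemma Schroeder_Im_pos: "Schroeder_solution \<sigma> \<Longrightarrow> 0 < Im z \<Longrightarrow> 0 < Im (\<sigma> z)"
  unfolding Schroeder_solution_def using self_map_Im_pos by blast

lemma Schroeder_norm_ii_pos: "Schroeder_solution \<sigma> \<Longrightarrow> 0 < R \<Longrightarrow> 0 < cmod (\<sigma> (of_real R * \<i>))"
  using Schroeder_Im_pos[of \<sigma> "of_real R * \<i>"] by fastforce

lemma Schroeder_rescaled_limit_props:
  assumes \<sigma>: "Schroeder_solution \<sigma>"
    and R: "filterlim R at_top sequentially" "\<And>k. 0 < R k" and N: "\<And>k. 0 < N k"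
    and lim: "\<And>v. 0 < Im v \<Longrightarrow> (\<lambda>k. \<sigma> (of_real (R k) * v) / of_real (N k)) \<longlonglongrightarrow> G v"
    and v: "0 < Im v"
  shows "G (of_real A * v) = of_real A * G v" and "cmod (G v) * Im v \<le> cmod v * Im (G v)"
proof -
  define F where "F k w = \<sigma> (of_real (R k) * w) / of_real (N k)" for k w
  have \<sigma>_hol: "\<sigma> holomorphic_on \<bbbH>" and \<sigma>_maps: "\<sigma> ` \<bbbH> \<subseteq> \<bbbH>"
    using \<sigma> by (simp_all add: Schroeder_solution_def)
  have F_hol: "F k holomorphic_on \<bbbH>" and F_maps: "F k ` \<bbbH> \<subseteq> \<bbbH>" for k
    unfolding F_def using rescaled_self_map[OF \<sigma>_hol \<sigma>_maps R(2) N] by blast+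
  define Y where "Y k = \<Phi> (of_real (R k) * v) / of_real (R k)" for k
  have Y_in: "0 < Im (Y k)" for k
    using self_map_Im_pos[OF self_map, of "of_real (R k) * v"] v R(2)[of k]
    by (simp add: Y_def Im_divide_of_real)
  have Y: "Y \<longlonglongrightarrow> of_real A * v"
    unfolding Y_def using filterlim_compose[OF Phi_rescaled_tendsto[OF v] R(1)] .
  have "F k (Y k) = of_real A * F k v" for k
    using \<sigma> v R(2)[of k] by (simp add: F_def Y_def Schroeder_solution_def)
  moreover have "(\<lambda>k. of_real A * F k v) \<longlonglongrightarrow> of_real A * G v"
    using lim[OF v] unfolding F_def by (rule tendsto_mult_left)
  ultimately have FY: "(\<lambda>k. F k (Y k)) \<longlonglongrightarrow> of_real A * G v"
    by simp
  have Av: "0 < Im (of_real A * v)" using v A_gt_1 by simp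
  have "(cmod (G (of_real A * v) - of_real A * G v))\<^sup>2 * (Im (of_real A * v) * Im (of_real A * v))
      \<le> (cmod (of_real A * v - of_real A * v))\<^sup>2 * (Im (G (of_real A * v)) * Im (of_real A * G v))"
    using Av Y_in Y lim[OF Av] FY
    by (intro Schwarz_Pick_limit[OF F_hol F_maps, where x = "\<lambda>_. of_real A * v" and y = Y])
      (simp_all add: F_def)
  then show "G (of_real A * v) = of_real A * G v"
    using Av A_gt_1 v by (simp add: mult_le_0_iff)
  have Im_G: "0 \<le> Im (G v)"
    using tendsto_Im[OF lim[OF v]] self_map_Im_pos[OF F_maps] v
    by (intro LIMSEQ_le_const) (auto simp: F_def intro: less_imp_le)
  have "(cmod (of_real A * G v - G v))\<^sup>2 * (Im (of_real A * v) * Im v)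
      \<le> (cmod (of_real A * v - v))\<^sup>2 * (Im (of_real A * G v) * Im (G v))"
    using v Y_in Y lim[OF v] FY
    by (intro Schwarz_Pick_limit[OF F_hol F_maps, where x = Y and y = "\<lambda>_. v"])
      (simp_all add: F_def)
  moreover have "cmod (of_real A * w - w) = (A - 1) * cmod w" for w
  proof -
    have "of_real A * w - w = of_real (A - 1) * w" by (simp add: algebra_simps)
    then show ?thesis using A_gt_1 by (simp only: norm_mult norm_of_real)
  qed
  ultimately have "((A - 1)\<^sup>2 * A) * (cmod (G v) * Im v)\<^sup>2 \<le> ((A - 1)\<^sup>2 * A) * (cmod v * Im (G v))\<^sup>2"
    by (simp add: power_mult_distrib power2_eq_square mult_ac)
  then have "(cmod (G v) * Im v)\<^sup>2 \<le> (cmod v * Im (G v))\<^sup>2"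
    using A_gt_1 by (simp add: mult_le_cancel_left_pos)
  then show "cmod (G v) * Im v \<le> cmod v * Im (G v)"
    by (rule power2_le_imp_le) (use Im_G in simp)
qed

lemma Schroeder_rescaled_limit_eq:
  assumes \<sigma>: "Schroeder_solution \<sigma>"
    and R: "filterlim R at_top sequentially" "\<And>k. 0 < R k" and G_hol: "G holomorphic_on \<bbbH>"
    and G_lim: "\<And>v. 0 < Im v \<Longrightarrow>
      (\<lambda>k. \<sigma> (of_real (R k) * v) / of_real (cmod (\<sigma> (of_real (R k) * \<i>)))) \<longlonglongrightarrow> G v"
    and v: "0 < Im v"
  shows "G v = v"
proof -
  have homogeneous: "G (of_real A * w) = of_real A * G w"
    and sin_Arg_le: "cmod (G w) * Im w \<le> cmod w * Im (G w)" if "0 < Im w" for w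
    using Schroeder_rescaled_limit_props[OF \<sigma> R Schroeder_norm_ii_pos[OF \<sigma> R(2)] G_lim that] by auto
  have Im_G_nonneg: "0 \<le> Im (G w)" if "0 < Im w" for w
  proof -
    have "0 \<le> cmod (G w) * Im w" using that by simp
    also have "\<dots> \<le> cmod w * Im (G w)" using sin_Arg_le[OF that] .
    finally show ?thesis using that by (auto simp: zero_le_mult_iff)
  qed
  have "(\<lambda>k. cmod (\<sigma> (of_real (R k) * \<i>) / of_real (cmod (\<sigma> (of_real (R k) * \<i>))))) \<longlonglongrightarrow> 1"
    using Schroeder_norm_ii_pos[OF \<sigma> R(2)] by (simp add: norm_divide)
  then have "cmod (G \<i>) = 1"
    using tendsto_norm[OF G_lim[of \<i>]] by (simp add: LIMSEQ_unique)
  moreover have "cmod (G \<i>) \<le> Im (G \<i>)"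
    using sin_Arg_le[of \<i>] by simp
  ultimately have G_ii: "G \<i> = \<i>"
    using Im_le_cmod[of "G \<i>"] cmod_power2[of "G \<i>"] by (simp add: complex_eq_iff)
  have G_maps: "G ` \<bbbH> \<subseteq> \<bbbH>"
  proof clarsimp
    fix w assume w: "0 < Im w"
    show "0 < Im (G w)"
    proof (rule ccontr)
      assume "\<not> 0 < Im (G w)"
      then have "Im (G w) = 0" using Im_G_nonneg[OF w] by simp
      then have "G \<i> = G w"
        using holomorphic_Im_nonneg_zero_imp_const[OF G_hol Im_G_nonneg w] by simp
      with G_ii \<open>Im (G w) = 0\<close> show False by simp
    qed
  qed
  have "\<bar>Arg (G w) - pi / 2\<bar> \<le> \<bar>Arg w - pi / 2\<bar>" if "0 < Im w" for w
    using dist_Arg_pi_half_le[OF that _ sin_Arg_le[OF that]] self_map_Im_pos[OF G_maps that] .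
  then obtain \<mu> where \<mu>: "\<And>w. 0 < Im w \<Longrightarrow> G w = of_real \<mu> * w"
    using self_map_eq_dilation[OF G_hol G_maps A_gt_1 homogeneous] by blast
  with G_ii have "\<mu> = 1" by (simp add: complex_eq_iff)
  with \<mu>[OF v] show ?thesis by simp
qed

lemma Schroeder_rescaled_subseq:
  assumes \<sigma>: "Schroeder_solution \<sigma>" and R1: "\<And>k. 1 \<le> R k" and R: "filterlim R at_top sequentially"
  obtains r where "strict_mono r"
    "\<And>v. 0 < Im v \<Longrightarrow>
      (\<lambda>k. \<sigma> (of_real (R (r k)) * v) / of_real (cmod (\<sigma> (of_real (R (r k)) * \<i>)))) \<longlonglongrightarrow> v"
proof -
  define F where "F k v = \<sigma> (of_real (R k) * v) / of_real (cmod (\<sigma> (of_real (R k) * \<i>)))" for k v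
  have \<sigma>_hol: "\<sigma> holomorphic_on \<bbbH>" and \<sigma>_maps: "\<sigma> ` \<bbbH> \<subseteq> \<bbbH>"
    using \<sigma> by (simp_all add: Schroeder_solution_def)
  have R0: "0 < R k" for k using R1[of k] by linarith
  have F_hol: "F k holomorphic_on \<bbbH>" and F_maps: "F k ` \<bbbH> \<subseteq> \<bbbH>" for k
    unfolding F_def using rescaled_self_map[OF \<sigma>_hol \<sigma>_maps R0 Schroeder_norm_ii_pos[OF \<sigma> R0]]
    by blast+
  have "cmod (F k \<i>) \<le> 1" for k
    using Schroeder_norm_ii_pos[OF \<sigma> R0[of k]] by (simp add: F_def norm_divide)
  then obtain G r where G_hol: "G holomorphic_on \<bbbH>" and "strict_mono r"
    and G_lim: "\<And>v. 0 < Im v \<Longrightarrow> (\<lambda>k. F (r k) v) \<longlonglongrightarrow> G v"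
    by (rule self_maps_normal_family[of F 1, OF F_hol F_maps]) auto
  have Rr: "filterlim (\<lambda>k. R (r k)) at_top sequentially"
    using filterlim_compose[OF R filterlim_subseq[OF \<open>strict_mono r\<close>]] .
  have "G v = v" if "0 < Im v" for v
    using \<sigma> Rr R0 G_hol G_lim that unfolding F_def
    by (rule Schroeder_rescaled_limit_eq[of \<sigma> "\<lambda>k. R (r k)" G v])
  with G_lim show ?thesis
    by (intro that[OF \<open>strict_mono r\<close>]) (simp add: F_def)
qed

lemma Schroeder_rescaled_tendsto_at_top:
  assumes "Schroeder_solution \<sigma>" "0 < Im v"
  shows "((\<lambda>R. \<sigma> (of_real R * v) / of_real (cmod (\<sigma> (of_real R * \<i>)))) \<longlongrightarrow> v) at_top"
proof (rule tendsto_at_top_by_subsequences)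
  fix X :: "nat \<Rightarrow> real" assume "\<And>k. 1 \<le> X k" "filterlim X at_top sequentially"
  then obtain r where "strict_mono r" "\<And>v. 0 < Im v \<Longrightarrow>
      (\<lambda>k. \<sigma> (of_real (X (r k)) * v) / of_real (cmod (\<sigma> (of_real (X (r k)) * \<i>)))) \<longlonglongrightarrow> v"
    by (rule Schroeder_rescaled_subseq[OF assms(1), of X]) auto
  with assms(2) show "\<exists>r. strict_mono r \<and>
      (\<lambda>k. \<sigma> (of_real (X (r k)) * v) / of_real (cmod (\<sigma> (of_real (X (r k)) * \<i>)))) \<longlonglongrightarrow> v"
    by blast
qed

lemma Schroeder_rescaled_tendsto:
  assumes \<sigma>: "Schroeder_solution \<sigma>" and R: "filterlim R at_top sequentially"
    and v: "v \<longlonglongrightarrow> v0" "0 < Im v0"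
  shows "(\<lambda>k. \<sigma> (of_real (R k) * v k) / of_real (cmod (\<sigma> (of_real (R k) * \<i>)))) \<longlonglongrightarrow> v0"
proof (rule self_maps_tendsto_moving_point[OF _ v])
  have \<sigma>_hol: "\<sigma> holomorphic_on \<bbbH>" and \<sigma>_maps: "\<sigma> ` \<bbbH> \<subseteq> \<bbbH>"
    using \<sigma> by (simp_all add: Schroeder_solution_def)
  have "\<forall>\<^sub>F k in sequentially. 0 < R k"
    using R by (simp add: filterlim_at_top_dense)
  then show "\<forall>\<^sub>F k in sequentially.
      (\<lambda>w. \<sigma> (of_real (R k) * w) / of_real (cmod (\<sigma> (of_real (R k) * \<i>)))) holomorphic_on \<bbbH> \<and>
      (\<lambda>w. \<sigma> (of_real (R k) * w) / of_real (cmod (\<sigma> (of_real (R k) * \<i>)))) ` \<bbbH> \<subseteq> \<bbbH>"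
    by eventually_elim
      (use rescaled_self_map[OF \<sigma>_hol \<sigma>_maps] Schroeder_norm_ii_pos[OF \<sigma>] in blast)
  show "(\<lambda>k. \<sigma> (of_real (R k) * v0) / of_real (cmod (\<sigma> (of_real (R k) * \<i>)))) \<longlonglongrightarrow> v0"
    using filterlim_compose[OF Schroeder_rescaled_tendsto_at_top[OF \<sigma> v(2)] R] .
qed

lemma Schroeder_norm_ii_tendsto:
  assumes \<sigma>: "Schroeder_solution \<sigma>"
  shows "filterlim (\<lambda>R. cmod (\<sigma> (of_real R * \<i>))) at_top at_top"
proof -
  define N where "N R = cmod (\<sigma> (of_real R * \<i>))" for R
  have N_pos: "0 < N R" if "0 < R" for R unfolding N_def using Schroeder_norm_ii_pos[OF \<sigma> that] .
  have "((\<lambda>R. cmod (\<sigma> (of_real R * (of_real A * \<i>)) / of_real (N R))) \<longlongrightarrow> cmod (of_real A * \<i>)) at_top"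
    using tendsto_norm[OF Schroeder_rescaled_tendsto_at_top[OF \<sigma>, of "of_real A * \<i>"]] A_gt_1
    by (simp add: N_def)
  moreover have "cmod (of_real A * \<i>) = A"
    using A_gt_1 by (simp add: norm_mult)
  moreover have "\<forall>\<^sub>F R in at_top. cmod (\<sigma> (of_real R * (of_real A * \<i>)) / of_real (N R)) = N (A * R) / N R"
    using eventually_gt_at_top[of 0]
  proof eventually_elim
    case (elim R)
    show ?case using N_pos[OF elim] by (simp add: N_def norm_divide mult_ac)
  qed
  ultimately have "((\<lambda>R. N (A * R) / N R) \<longlongrightarrow> A) at_top"
    using tendsto_cong by force
  moreover have "(1 + A) / 2 < A" using A_gt_1 by (simp add: field_simps)
  ultimately have "\<forall>\<^sub>F R in at_top. (1 + A) / 2 < N (A * R) / N R"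
    by (rule order_tendstoD)
  then obtain R0 where R0: "\<And>R. R0 \<le> R \<Longrightarrow> (1 + A) / 2 < N (A * R) / N R"
    by (auto simp: eventually_at_top_linorder)
  define R1 where "R1 = max 1 R0"
  have "continuous_on \<bbbH> \<sigma>"
    using \<sigma> holomorphic_on_imp_continuous_on by (auto simp: Schroeder_solution_def)
  moreover have "continuous_on {R1..} (\<lambda>R. of_real R * \<i>)"
    by (intro continuous_intros)
  moreover have "(\<lambda>R. of_real R * \<i>) ` {R1..} \<subseteq> \<bbbH>"
    by (auto simp: R1_def)
  ultimately have "continuous_on {R1..} (\<lambda>R. \<sigma> (of_real R * \<i>))"
    by (rule continuous_on_compose2)
  then have cont: "continuous_on {R1..} N"
    unfolding N_def by (rule continuous_on_norm)
  have "R1 \<le> R \<Longrightarrow> 0 < N R" for R using N_pos by (simp add: R1_def)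
  moreover have "(1 + A) / 2 * N R \<le> N (A * R)" if "R1 \<le> R" for R
    using R0[of R] N_pos[of R] that by (simp add: R1_def pos_less_divide_eq)
  moreover have "1 < (1 + A) / 2" "0 < R1" using A_gt_1 by (simp_all add: R1_def)
  ultimately show ?thesis
    unfolding N_def[symmetric] by (intro filterlim_at_top_by_dilation_ratio[OF A_gt_1 _ _ cont])
qed

lemma Schroeder_sector_asymptotics:
  assumes \<sigma>: "Schroeder_solution \<sigma>" and "0 < \<delta>"
  shows "((\<lambda>z. \<sigma> z / (of_real (cmod (\<sigma> (of_real (cmod z) * \<i>))) * sgn z)) \<longlongrightarrow> 1)
      (sector_at_infinity \<delta>)"
proof (rule tendsto_sector_at_infinityI[OF \<open>0 < \<delta>\<close>])
  fix z w assume R: "filterlim (\<lambda>k. cmod (z k)) at_top sequentially"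
    and w: "0 < Im w" and u: "(\<lambda>k. sgn (z k)) \<longlonglongrightarrow> w"
  have "(\<lambda>k. \<sigma> (of_real (cmod (z k)) * sgn (z k)) / of_real (cmod (\<sigma> (of_real (cmod (z k)) * \<i>))))
      \<longlonglongrightarrow> w"
    using Schroeder_rescaled_tendsto[OF \<sigma> R u w] .
  moreover have "of_real (cmod (z k)) * sgn (z k) = z k" for k
    by (cases "z k = 0") (simp_all add: sgn_eq)
  moreover have "w \<noteq> 0" using w by auto
  ultimately have "(\<lambda>k. \<sigma> (z k) / of_real (cmod (\<sigma> (of_real (cmod (z k)) * \<i>))) / sgn (z k)) \<longlonglongrightarrow> w / w"
    using u by (intro tendsto_divide) auto
  with \<open>w \<noteq> 0\<close> show
    "(\<lambda>k. \<sigma> (z k) / (of_real (cmod (\<sigma> (of_real (cmod (z k)) * \<i>))) * sgn (z k))) \<longlonglongrightarrow> 1"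
    by (simp add: field_simps)
qed

lemma Schroeder_Klim_infinity_infinity:
  assumes \<sigma>: "Schroeder_solution \<sigma>"
  shows "Klim_infinity_infinity \<sigma>"
  unfolding Klim_infinity_infinity_def
proof (intro allI impI)
  fix \<delta> :: real assume "0 < \<delta>"
  define N where "N z = cmod (\<sigma> (of_real (cmod z) * \<i>))" for z
  have "filterlim cmod at_top (sector_at_infinity \<delta>)"
    unfolding sector_at_infinity_def by (rule filterlim_mono[OF filterlim_norm_at_top order_refl inf_le1])
  then have "filterlim N at_top (sector_at_infinity \<delta>)"
    unfolding N_def by (rule filterlim_compose[OF Schroeder_norm_ii_tendsto[OF \<sigma>]])
  moreover have "((\<lambda>z. cmod (\<sigma> z / (of_real (N z) * sgn z))) \<longlongrightarrow> 1) (sector_at_infinity \<delta>)"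
    using tendsto_norm[OF Schroeder_sector_asymptotics[OF \<sigma> \<open>0 < \<delta>\<close>]] by (simp add: N_def)
  ultimately have "filterlim (\<lambda>z. cmod (\<sigma> z / (of_real (N z) * sgn z)) * N z) at_top (sector_at_infinity \<delta>)"
    by (intro filterlim_tendsto_pos_mult_at_top) auto
  moreover have "\<forall>\<^sub>F z in sector_at_infinity \<delta>. cmod (\<sigma> z / (of_real (N z) * sgn z)) * N z = cmod (\<sigma> z)"
    unfolding sector_at_infinity_def eventually_inf_principal
  proof (intro always_eventually allI impI)
    fix z assume "z \<in> sector \<delta>"
    then have "z \<noteq> 0" using sector_Im_ge(2) \<open>0 < \<delta>\<close> by blast
    moreover have "0 < N z"
      unfolding N_def using Schroeder_norm_ii_pos[OF \<sigma>] \<open>z \<noteq> 0\<close> by simp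
    ultimately show "cmod (\<sigma> z / (of_real (N z) * sgn z)) * N z = cmod (\<sigma> z)"
      by (simp add: norm_divide norm_mult norm_sgn)
  qed
  ultimately have "filterlim (\<lambda>z. cmod (\<sigma> z)) at_top (sector_at_infinity \<delta>)"
    using filterlim_cong by force
  then show "filterlim \<sigma> at_infinity (sector_at_infinity \<delta>)"
    by (rule filterlim_norm_at_top_imp_at_infinity)
qed

lemma Schroeder_Klim_Arg:
  assumes \<sigma>: "Schroeder_solution \<sigma>"
  shows "Klim_infinity (\<lambda>z. Arg (\<sigma> z / z)) 0"
  unfolding Klim_infinity_def
proof (intro allI impI)
  fix \<delta> :: real assume "0 < \<delta>"
  define Q where "Q z = \<sigma> z / (of_real (cmod (\<sigma> (of_real (cmod z) * \<i>))) * sgn z)" for z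
  have "isCont Arg 1"
    by (rule continuous_at_Arg) (simp add: complex_nonpos_Reals_iff)
  then have "((\<lambda>z. Arg (Q z)) \<longlongrightarrow> Arg 1) (sector_at_infinity \<delta>)"
    unfolding Q_def using Schroeder_sector_asymptotics[OF \<sigma> \<open>0 < \<delta>\<close>]
    by (rule isCont_tendsto_compose)
  moreover have "\<forall>\<^sub>F z in sector_at_infinity \<delta>. Arg (Q z) = Arg (\<sigma> z / z)"
    unfolding sector_at_infinity_def eventually_inf_principal
  proof (intro always_eventually allI impI)
    fix z assume "z \<in> sector \<delta>"
    then have "z \<noteq> 0" using sector_Im_ge(2) \<open>0 < \<delta>\<close> by blast
    define N where "N = cmod (\<sigma> (of_real (cmod z) * \<i>))"
    have "0 < N" unfolding N_def using Schroeder_norm_ii_pos[OF \<sigma>] \<open>z \<noteq> 0\<close> by simp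
    have "\<sigma> z / z = Q z * of_real (N / cmod z)"
      using \<open>z \<noteq> 0\<close> \<open>0 < N\<close> by (simp add: Q_def N_def sgn_eq field_simps)
    then show "Arg (Q z) = Arg (\<sigma> z / z)"
      using \<open>z \<noteq> 0\<close> \<open>0 < N\<close> by simp
  qed
  ultimately show "((\<lambda>z. Arg (\<sigma> z / z)) \<longlongrightarrow> 0) (sector_at_infinity \<delta>)"
    by (simp add: tendsto_cong)
qed

section \<open>Uniqueness up to a positive factor\<close>

lemma Im_funpow_Phi_ge:
  assumes "0 < Im z"
  shows "A ^ n * Im z \<le> Im ((\<Phi> ^^ n) z)"
proof (induction n)
  case (Suc n)
  have "A * (A ^ n * Im z) \<le> A * Im ((\<Phi> ^^ n) z)"
    using Suc A_gt_1 by simp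
  also have "\<dots> \<le> Im ((\<Phi> ^^ Suc n) z)"
    using A_le_Im_Phi funpow_self_map_Im_pos[OF self_map assms] by simp
  finally show ?case by simp
qed simp

lemma Im_funpow_Phi_tendsto:
  assumes "0 < Im z"
  shows "filterlim (\<lambda>n. Im ((\<Phi> ^^ n) z)) at_top sequentially"
proof (rule filterlim_at_top_mono[OF _ always_eventually])
  have "filterlim (\<lambda>n. norm (A ^ n)) at_top sequentially"
    using A_gt_1 by (intro filterlim_at_infinity_imp_norm_at_top filterlim_realpow_sequentially_gt1) simp
  then have "filterlim (\<lambda>n. A ^ n) at_top sequentially"
    using A_gt_1 by simp
  then show "filterlim (\<lambda>n. A ^ n * Im z) at_top sequentially"
    using assms by (intro filterlim_at_top_mult_tendsto_pos[OF tendsto_const])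
qed (use Im_funpow_Phi_ge[OF assms] in auto)

text \<open>Successive points of the orbit are at bounded hyperbolic distance, while \<open>Im\<close> grows
  at least geometrically.\<close>
lemma orbit_Stolz_angle:
  assumes z: "0 < Im z"
  shows "cmod ((\<Phi> ^^ n) z - z) \<le> sqrt (hdist (\<Phi> z) z) * A / (A - 1) * Im ((\<Phi> ^^ n) z)"
proof -
  define D where "D = hdist (\<Phi> z) z"
  define K where "K = sqrt D * A / (A - 1)"
  define Z where "Z n = (\<Phi> ^^ n) z" for n
  have Z_in: "0 < Im (Z n)" for n
    unfolding Z_def using funpow_self_map_Im_pos[OF self_map z] .
  have "0 \<le> D"
    unfolding D_def using self_map_Im_pos[OF self_map z] z by (rule hdist_nonneg)
  then have "0 \<le> K" using A_gt_1 by (simp add: K_def)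
  have Im_step: "A * Im (Z n) \<le> Im (Z (Suc n))" for n
    using A_le_Im_Phi[OF Z_in[of n]] by (simp add: Z_def)
  have step: "cmod (Z (Suc n) - Z n) \<le> sqrt D * Im (Z (Suc n))" for n
  proof -
    have "Z (Suc n) = (\<Phi> ^^ n) (\<Phi> z)" by (simp add: Z_def funpow_swap1)
    then have "hdist (Z (Suc n)) (Z n) \<le> D"
      unfolding D_def Z_def
      using hdist_funpow_le[OF holomorphic self_map self_map_Im_pos[OF self_map z] z] by simp
    then have "(cmod (Z (Suc n) - Z n))\<^sup>2 \<le> D * (Im (Z (Suc n)) * Im (Z n))"
      using norm_diff_sq_eq_hdist[OF Z_in Z_in] Z_in[of n] Z_in[of "Suc n"]
      by (simp add: mult_right_mono)
    also have "\<dots> \<le> D * (Im (Z (Suc n)) * Im (Z (Suc n)))"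
      using Im_step[of n] A_gt_1 Z_in[of n] Z_in[of "Suc n"] \<open>0 \<le> D\<close>
      by (intro mult_left_mono) (auto intro: order_trans[OF _ Im_step[of n]])
    also have "\<dots> = (sqrt D * Im (Z (Suc n)))\<^sup>2"
      using \<open>0 \<le> D\<close> by (simp add: power2_eq_square)
    finally show ?thesis
      by (rule power2_le_imp_le) (use \<open>0 \<le> D\<close> Z_in[of "Suc n"] in simp)
  qed
  have "cmod (Z n - z) \<le> K * Im (Z n)"
  proof (induction n)
    case 0
    then show ?case using \<open>0 \<le> K\<close> Z_in[of 0] by (simp add: Z_def)
  next
    case (Suc n)
    have "cmod (Z (Suc n) - z) \<le> cmod (Z (Suc n) - Z n) + cmod (Z n - z)"
      by (rule norm_diff_triangle_le[of _ "Z n"]) simp_all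
    also have "\<dots> \<le> sqrt D * Im (Z (Suc n)) + K * (Im (Z (Suc n)) / A)"
    proof -
      have "Im (Z n) \<le> Im (Z (Suc n)) / A"
        using Im_step[of n] A_gt_1 by (simp add: pos_le_divide_eq mult.commute)
      then have "K * Im (Z n) \<le> K * (Im (Z (Suc n)) / A)"
        using \<open>0 \<le> K\<close> by (rule mult_left_mono)
      with step[of n] Suc show ?thesis by linarith
    qed
    also have "\<dots> = K * Im (Z (Suc n))"
      using A_gt_1 by (simp add: K_def field_simps)
    finally show ?case .
  qed
  then show ?thesis by (simp add: Z_def K_def D_def)
qed

lemma orbit_rescaled_bounds:
  assumes z: "0 < Im z" and w: "0 < Im w"
  obtains C c where "0 < c"
    "\<And>n. cmod ((\<Phi> ^^ n) z / of_real (Im ((\<Phi> ^^ n) z))) \<le> C"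
    "\<And>n. cmod ((\<Phi> ^^ n) w / of_real (Im ((\<Phi> ^^ n) z))) \<le> C"
    "\<And>n. c \<le> Im ((\<Phi> ^^ n) w / of_real (Im ((\<Phi> ^^ n) z)))"
proof -
  define R where "R n = Im ((\<Phi> ^^ n) z)" for n
  define a where "a n = (\<Phi> ^^ n) z / of_real (R n)" for n
  define b where "b n = (\<Phi> ^^ n) w / of_real (R n)" for n
  define K where "K = sqrt (hdist (\<Phi> z) z) * A / (A - 1)"
  define D where "D = hdist w z"
  have R_pos: "0 < R n" for n
    unfolding R_def using funpow_self_map_Im_pos[OF self_map z] .
  have R_ge: "Im z \<le> R n" for n
    using mult_right_mono[OF one_le_power[of A n] less_imp_le[OF z]] A_gt_1 Im_funpow_Phi_ge[OF z, of n]
    unfolding R_def by simp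
  have Im_a: "Im (a n) = 1" for n
    using R_pos[of n] by (simp add: a_def R_def Im_divide_of_real)
  have Im_b: "0 < Im (b n)" for n
    using R_pos[of n] funpow_self_map_Im_pos[OF self_map w] by (simp add: b_def Im_divide_of_real)
  have "0 \<le> D" unfolding D_def using w z by (rule hdist_nonneg)
  have "0 \<le> K"
    unfolding K_def using A_gt_1 hdist_nonneg[OF self_map_Im_pos[OF self_map z] z] by simp
  have a_bound: "cmod (a n) \<le> cmod z / Im z + K" for n
  proof -
    have "cmod ((\<Phi> ^^ n) z) \<le> cmod z + K * R n"
      using orbit_Stolz_angle[OF z, of n] norm_triangle_ineq2[of "(\<Phi> ^^ n) z" z]
      unfolding K_def R_def by linarith
    then have "cmod (a n) \<le> cmod z / R n + K"
      using R_pos[of n] by (simp add: a_def norm_divide field_simps)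
    also have "cmod z / R n \<le> cmod z / Im z"
      using R_ge[of n] z by (intro divide_left_mono) auto
    finally show ?thesis by simp
  qed
  have hdist_ba: "hdist (b n) (a n) \<le> D" for n
    unfolding a_def b_def D_def hdist_divide_of_real[OF R_pos]
    using hdist_funpow_le[OF holomorphic self_map w z] .
  have "cmod (b n) \<le> (2 + D) * (cmod z / Im z + K)" for n
  proof -
    have "cmod (b n) \<le> (2 + hdist (b n) (a n)) * cmod (a n)"
      using Im_b Im_a by (intro norm_le_hdist) auto
    also have "\<dots> \<le> (2 + D) * (cmod z / Im z + K)"
      using hdist_ba[of n] a_bound[of n] \<open>0 \<le> D\<close> by (intro mult_mono) auto
    finally show ?thesis .
  qed
  moreover have "cmod (a n) \<le> (2 + D) * (cmod z / Im z + K)" for n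
  proof -
    have "cmod z / Im z + K \<le> (2 + D) * (cmod z / Im z + K)"
      using \<open>0 \<le> D\<close> \<open>0 \<le> K\<close> z by (simp add: mult_le_cancel_right1 add_nonneg_nonneg not_less)
    with a_bound[of n] show ?thesis by linarith
  qed
  moreover have "1 / (2 + D) \<le> Im (b n)" for n
  proof -
    have "Im (a n) \<le> (2 + hdist (a n) (b n)) * Im (b n)"
      using Im_b Im_a by (intro Im_le_hdist) auto
    also have "\<dots> \<le> (2 + D) * Im (b n)"
      using hdist_ba[of n] Im_b[of n]
      by (intro mult_right_mono) (auto simp: hdist_def mult.commute norm_minus_commute)
    finally show ?thesis using Im_a[of n] \<open>0 \<le> D\<close> by (simp add: field_simps)
  qed
  moreover have "0 < 1 / (2 + D)" using \<open>0 \<le> D\<close> by simp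
  ultimately show ?thesis
    using that[of "1 / (2 + D)" "(2 + D) * (cmod z / Im z + K)"] by (simp add: a_def b_def R_def)
qed

lemma orbit_rescaled_subseq:
  assumes z: "0 < Im z" and w: "0 < Im w"
  obtains r \<alpha> \<beta> where "strict_mono r" "0 < Im \<alpha>" "0 < Im \<beta>"
    "(\<lambda>n. (\<Phi> ^^ r n) z / of_real (Im ((\<Phi> ^^ r n) z))) \<longlonglongrightarrow> \<alpha>"
    "(\<lambda>n. (\<Phi> ^^ r n) w / of_real (Im ((\<Phi> ^^ r n) z))) \<longlonglongrightarrow> \<beta>"
proof -
  define a where "a n = (\<Phi> ^^ n) z / of_real (Im ((\<Phi> ^^ n) z))" for n
  define b where "b n = (\<Phi> ^^ n) w / of_real (Im ((\<Phi> ^^ n) z))" for n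
  obtain C c where "0 < c" "\<And>n. cmod (a n) \<le> C" "\<And>n. cmod (b n) \<le> C" and Im_b: "\<And>n. c \<le> Im (b n)"
    unfolding a_def b_def by (rule orbit_rescaled_bounds[OF z w]) auto
  then have "bounded (range a \<times> range b)"
    by (intro bounded_Times) (auto simp: bounded_iff)
  then have "bounded (range (\<lambda>n. (a n, b n)))"
    by (rule bounded_subset) auto
  then obtain p r where "strict_mono r" and p: "((\<lambda>n. (a n, b n)) \<circ> r) \<longlonglongrightarrow> p"
    using bounded_imp_convergent_subsequence by blast
  have a_lim: "(\<lambda>n. a (r n)) \<longlonglongrightarrow> fst p" and b_lim: "(\<lambda>n. b (r n)) \<longlonglongrightarrow> snd p"
    using tendsto_fst[OF p] tendsto_snd[OF p] by (simp_all add: o_def)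
  have "Im (a n) = 1" for n
    using funpow_self_map_Im_pos[OF self_map z, of n] by (simp add: a_def Im_divide_of_real)
  then have "Im (fst p) = 1"
    using tendsto_Im[OF a_lim] by (simp add: LIMSEQ_const_iff)
  moreover have "c \<le> Im (snd p)"
    using tendsto_Im[OF b_lim] Im_b by (intro LIMSEQ_le_const) auto
  ultimately show ?thesis
    using that[OF \<open>strict_mono r\<close>, of "fst p" "snd p"] a_lim b_lim \<open>0 < c\<close>
    by (simp add: a_def b_def)
qed

lemma Schroeder_ratio_rescaled_tendsto:
  assumes \<sigma>: "Schroeder_solution \<sigma>" and \<tau>: "Schroeder_solution \<tau>"
    and R: "filterlim R at_top sequentially" and v: "v \<longlonglongrightarrow> v0" "0 < Im v0"
  shows "(\<lambda>k. \<tau> (of_real (R k) * v k) / \<sigma> (of_real (R k) * v k)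
      * of_real (cmod (\<sigma> (of_real (R k) * \<i>)) / cmod (\<tau> (of_real (R k) * \<i>)))) \<longlonglongrightarrow> 1"
proof -
  have "v0 \<noteq> 0" using v(2) by auto
  have "(\<lambda>k. (\<tau> (of_real (R k) * v k) / of_real (cmod (\<tau> (of_real (R k) * \<i>))))
      / (\<sigma> (of_real (R k) * v k) / of_real (cmod (\<sigma> (of_real (R k) * \<i>))))) \<longlonglongrightarrow> v0 / v0"
    using Schroeder_rescaled_tendsto[OF \<tau> R v] Schroeder_rescaled_tendsto[OF \<sigma> R v] \<open>v0 \<noteq> 0\<close>
    by (rule tendsto_divide)
  then show ?thesis
    using \<open>v0 \<noteq> 0\<close> by (simp add: field_simps)
qed

lemma Schroeder_ratio_funpow:
  assumes \<sigma>: "Schroeder_solution \<sigma>" and \<tau>: "Schroeder_solution \<tau>" and "0 < Im z"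
  shows "\<tau> ((\<Phi> ^^ n) z) / \<sigma> ((\<Phi> ^^ n) z) = \<tau> z / \<sigma> z"
  using Schroeder_funpow[OF \<sigma> \<open>0 < Im z\<close>] Schroeder_funpow[OF \<tau> \<open>0 < Im z\<close>] A_gt_1 by simp

lemma Schroeder_ratio_const:
  assumes \<sigma>: "Schroeder_solution \<sigma>" and \<tau>: "Schroeder_solution \<tau>" and z: "0 < Im z"
  shows "\<tau> z / \<sigma> z = \<tau> \<i> / \<sigma> \<i>"
proof -
  obtain r \<alpha> \<beta> where r: "strict_mono r" and "0 < Im \<alpha>" "0 < Im \<beta>"
    and \<alpha>: "(\<lambda>n. (\<Phi> ^^ r n) z / of_real (Im ((\<Phi> ^^ r n) z))) \<longlonglongrightarrow> \<alpha>"
    and \<beta>: "(\<lambda>n. (\<Phi> ^^ r n) \<i> / of_real (Im ((\<Phi> ^^ r n) z))) \<longlonglongrightarrow> \<beta>"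
    using orbit_rescaled_subseq[OF z, of \<i>] by auto
  define R where "R n = Im ((\<Phi> ^^ r n) z)" for n
  define \<rho> :: "nat \<Rightarrow> complex" where "\<rho> n = of_real (cmod (\<sigma> (of_real (R n) * \<i>)) / cmod (\<tau> (of_real (R n) * \<i>)))" for n
  have R: "filterlim R at_top sequentially"
    unfolding R_def using filterlim_compose[OF Im_funpow_Phi_tendsto[OF z] filterlim_subseq[OF r]] .
  have R_pos: "0 < R n" for n
    unfolding R_def using funpow_self_map_Im_pos[OF self_map z] .
  have "\<rho> n \<noteq> 0" for n
    using Schroeder_norm_ii_pos[OF \<sigma> R_pos] Schroeder_norm_ii_pos[OF \<tau> R_pos] by (simp add: \<rho>_def)
  have rescale: "of_real (R n) * (u / of_real (R n)) = u" for n and u :: complex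
    using R_pos[of n] by simp
  have "(\<lambda>n. \<tau> z / \<sigma> z * \<rho> n) \<longlonglongrightarrow> 1"
    using Schroeder_ratio_rescaled_tendsto[OF \<sigma> \<tau> R \<alpha>[folded R_def] \<open>0 < Im \<alpha>\<close>]
    unfolding rescale Schroeder_ratio_funpow[OF \<sigma> \<tau> z] \<rho>_def .
  moreover have "(\<lambda>n. \<tau> \<i> / \<sigma> \<i> * \<rho> n) \<longlonglongrightarrow> 1"
    using Schroeder_ratio_rescaled_tendsto[OF \<sigma> \<tau> R \<beta>[folded R_def] \<open>0 < Im \<beta>\<close>]
    unfolding rescale Schroeder_ratio_funpow[OF \<sigma> \<tau>, of \<i>, simplified] \<rho>_def .
  ultimately have "(\<lambda>n. (\<tau> z / \<sigma> z * \<rho> n) / (\<tau> \<i> / \<sigma> \<i> * \<rho> n)) \<longlonglongrightarrow> 1 / 1"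
    by (rule tendsto_divide) simp
  then have "(\<lambda>n. (\<tau> z / \<sigma> z) / (\<tau> \<i> / \<sigma> \<i>)) \<longlonglongrightarrow> 1"
    using \<open>\<And>n. \<rho> n \<noteq> 0\<close> by (simp add: nonzero_mult_divide_mult_cancel_right)
  then have "(\<tau> z / \<sigma> z) / (\<tau> \<i> / \<sigma> \<i>) = 1"
    by (simp add: LIMSEQ_const_iff)
  then show ?thesis
    unfolding divide_eq_1_iff by (rule conjunct2)
qed

lemma Schroeder_solution_unique:
  assumes \<sigma>: "Schroeder_solution \<sigma>" and \<tau>: "Schroeder_solution \<tau>"
  obtains \<mu> where "0 < \<mu>" "\<And>z. 0 < Im z \<Longrightarrow> \<tau> z = of_real \<mu> * \<sigma> z"
proof -
  define c where "c = \<tau> \<i> / \<sigma> \<i>"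
  define R where "R k = real (Suc k)" for k
  have R: "filterlim R at_top sequentially"
    unfolding R_def by (rule filterlim_compose[OF filterlim_real_sequentially filterlim_Suc])
  have "(\<lambda>k. \<tau> (of_real (R k) * \<i>) / \<sigma> (of_real (R k) * \<i>)
      * of_real (cmod (\<sigma> (of_real (R k) * \<i>)) / cmod (\<tau> (of_real (R k) * \<i>)))) \<longlonglongrightarrow> 1"
    using Schroeder_ratio_rescaled_tendsto[OF \<sigma> \<tau> R tendsto_const, of \<i>] by simp
  moreover have "\<tau> (of_real (R k) * \<i>) / \<sigma> (of_real (R k) * \<i>) = c" for k
    unfolding c_def by (rule Schroeder_ratio_const[OF \<sigma> \<tau>]) (simp add: R_def)
  ultimately have lim: "(\<lambda>k. c * of_real (cmod (\<sigma> (of_real (R k) * \<i>)) / cmod (\<tau> (of_real (R k) * \<i>))))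
      \<longlonglongrightarrow> 1"
    by (simp only:)
  have pos: "0 < cmod (\<sigma> (of_real (R k) * \<i>)) / cmod (\<tau> (of_real (R k) * \<i>))" for k
  proof -
    have "0 < R k" by (simp add: R_def)
    with Schroeder_norm_ii_pos[OF \<sigma>] Schroeder_norm_ii_pos[OF \<tau>] show ?thesis
      by (simp add: divide_pos_pos)
  qed
  obtain \<mu> where "0 < \<mu>" "c = of_real \<mu>"
    by (rule tendsto_mult_pos_real_imp_pos_real[OF pos lim]) auto
  moreover have "\<tau> z = c * \<sigma> z" if "0 < Im z" for z
  proof -
    have "\<sigma> z \<noteq> 0" using Schroeder_Im_pos[OF \<sigma> that] by auto
    with Schroeder_ratio_const[OF \<sigma> \<tau> that] show ?thesis
      by (simp add: c_def divide_eq_eq)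
  qed
  ultimately show ?thesis using that by auto
qed

end

theorem proposition2p4:
  fixes \<Phi> \<sigma> :: "complex \<Rightarrow> complex" and A :: real
  assumes \<Phi>_hol: "\<Phi> holomorphic_on \<bbbH>"
    and \<Phi>_maps: "\<Phi> ` \<bbbH> \<subseteq> \<bbbH>"
    and A_def: "A = (INF z\<in>\<bbbH>. Im (\<Phi> z) / Im z)"
    and A_gt: "A > 1"
    and \<sigma>_hol: "\<sigma> holomorphic_on \<bbbH>"
    and \<sigma>_maps: "\<sigma> ` \<bbbH> \<subseteq> \<bbbH>"
    and \<sigma>_eq: "\<forall>z\<in>\<bbbH>. \<sigma> (\<Phi> z) = of_real A * \<sigma> z"
  shows "Klim_infinity_infinity \<sigma>
    \<and> Klim_infinity (\<lambda>z. Arg (\<sigma> z / z)) 0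
    \<and> (\<forall>\<tau>. \<tau> holomorphic_on \<bbbH> \<and> \<tau> ` \<bbbH> \<subseteq> \<bbbH>
            \<and> (\<forall>z\<in>\<bbbH>. \<tau> (\<Phi> z) = of_real A * \<tau> z)
          \<longrightarrow> (\<exists>\<mu>::real. \<mu> > 0 \<and> (\<forall>z\<in>\<bbbH>. \<tau> z = of_real \<mu> * \<sigma> z)))"
proof -
  interpret hyperbolic_self_map \<Phi> A
    using \<Phi>_hol \<Phi>_maps A_def A_gt by unfold_locales
  have \<sigma>: "Schroeder_solution \<sigma>"
    using \<sigma>_hol \<sigma>_maps \<sigma>_eq by (simp add: Schroeder_solution_def)
  show ?thesis
  proof (intro conjI allI impI)
    show "Klim_infinity_infinity \<sigma>"
      using \<sigma> by (rule Schroeder_Klim_infinity_infinity)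
    show "Klim_infinity (\<lambda>z. Arg (\<sigma> z / z)) 0"
      using \<sigma> by (rule Schroeder_Klim_Arg)
    fix \<tau>
    assume "\<tau> holomorphic_on \<bbbH> \<and> \<tau> ` \<bbbH> \<subseteq> \<bbbH> \<and> (\<forall>z\<in>\<bbbH>. \<tau> (\<Phi> z) = of_real A * \<tau> z)"
    then have "Schroeder_solution \<tau>"
      by (simp add: Schroeder_solution_def)
    then obtain \<mu> where "0 < \<mu>" "\<And>z. 0 < Im z \<Longrightarrow> \<tau> z = of_real \<mu> * \<sigma> z"
      by (rule Schroeder_solution_unique[OF \<sigma>]) auto
    then show "\<exists>\<mu>::real. \<mu> > 0 \<and> (\<forall>z\<in>\<bbbH>. \<tau> z = of_real \<mu> * \<sigma> z)"
      by auto
  qed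
qed

end
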